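(* For any $\kappa>0$, there exist $M>1$ and $N\in\mathbb N$ such that for all $n\ge N$, \[\mathbb P\Big(\exists v\in\mathbb T_n: X_v\notin[n/M,Mn]\text{ or }Y_v\notin[n/M,Mn]\text{ or }T_v<n/M\text{ or }T_v+\frac{\mathbbm e_v}{R(X_v,Y_v)}>Mn\Big)\le e^{-\kappa n}.\]
   Context: Let $R(x,y)=\frac{x+1}{y+1}\vee\frac{y+1}{x+1}$ and $P(x,y)=\frac{y+1}{2(x+1)}\mathbb 1_{x\ge y}+(1-\frac{x+1}{2(y+1)})\mathbb 1_{x<y}$. Let $\mathbb T$ be the infinite rooted binary tree with root $\rho$, $\mathbb T_n$ its $n$th generation ($|\mathbb T_n|=2^n$), and write $v1,v2$ for the children of $v$. Attach to each vertex $v$ independent random variables $\mathcal U^{\rm split}_v,\mathcal U^{\rm dir}_v$ uniform on $(0,1)$ and $\mathbbm e_v$ exponential of parameter $1$, all independent over $v$. Set $B_\rho=H_\rho=1$, $T_\rho=0$. Recursively, let $D_v=1$ if $\mathcal U^{\rm dir}_v\le P(-\log B_v,-\log H_v)$ and $D_v=0$ otherwise; if $D_v=1$ set $B_{v1}=\mathcal U^{\rm split}_vB_v$, $B_{v2}=(1-\mathcal U^{\rm split}_v)B_v$, $H_{v1}=H_{v2}=H_v$; if $D_v=0$ set $H_{v1}=\mathcal U^{\rm split}_vH_v$, $H_{v2}=(1-\mathcal U^{\rm split}_v)H_v$, $B_{v1}=B_{v2}=B_v$. Let $X_v=-\log B_v$, $Y_v=-\log H_v$, and $T_{v1}=T_{v2}=T_v+\mathbbm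 e_v/R(X_v,Y_v)$. *)

theory Defs
  imports "HOL-Probability.Probability"
begin

definition Rf :: "real \<Rightarrow> real \<Rightarrow> real" where
  "Rf x y = max ((x+1)/(y+1)) ((y+1)/(x+1))"

definition Pf :: "real \<Rightarrow> real \<Rightarrow> real" where
  "Pf x y = (if x \<ge> y then (y+1)/(2*(x+1)) else 1 - (x+1)/(2*(y+1)))"

(* Vertices of the infinite rooted binary tree: finite words over bool, root = [].
   Children of v: v1 = v @ [False], v2 = v @ [True]. Generation n = words of length n.
   A sample point assigns to each vertex the triple (U_split, U_dir, e). *)
type_synonym vertex = "bool list"
type_synonym sample = "vertex \<Rightarrow> real \<times> real \<times> real"

definition label_measure :: "(real \<times> real \<times> real) measure" where
  "label_measure = uniform_measure lborel {0<..<1} \<Otimes>\<^sub>M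
     (uniform_measure lborel {0<..<1} \<Otimes>\<^sub>M density lborel (exponential_density 1))"

definition tree_space :: "sample measure" where
  "tree_space = (\<Pi>\<^sub>M v\<in>UNIV. label_measure)"

(* one step of the recursion: from state (B_v,H_v,T_v) at vertex v to the state of child c
   (c = False: child v1, c = True: child v2) *)
definition step :: "sample \<Rightarrow> vertex \<Rightarrow> real \<times> real \<times> real \<Rightarrow> bool \<Rightarrow> real \<times> real \<times> real" where
  "step \<omega> v s c =
     (case s of (B, H, T) \<Rightarrow>
      case \<omega> v of (us, ud, e) \<Rightarrow>
       (let X = - ln B; Y = - ln H; D = (ud \<le> Pf X Y);
            frac = (if c then 1 - us else us)
        in (if D then frac * B else B, if D then H else frac * H, T + e / Rf X Y)))"

fun walk :: "sample \<Rightarrow> vertex \<Rightarrow> real \<times> real \<times> real \<Rightarrow> bool list \<Rightarrow> real \<times> real \<times> real" where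
  "walk \<omega> v s [] = s"
| "walk \<omega> v s (c # cs) = walk \<omega> (v @ [c]) (step \<omega> v s c) cs"

definition state :: "sample \<Rightarrow> vertex \<Rightarrow> real \<times> real \<times> real" where
  "state \<omega> w = walk \<omega> [] (1, 1, 0) w"

definition Bv :: "sample \<Rightarrow> vertex \<Rightarrow> real" where "Bv \<omega> v = fst (state \<omega> v)"
definition Hv :: "sample \<Rightarrow> vertex \<Rightarrow> real" where "Hv \<omega> v = fst (snd (state \<omega> v))"
definition Tv :: "sample \<Rightarrow> vertex \<Rightarrow> real" where "Tv \<omega> v = snd (snd (state \<omega> v))"
definition Xv :: "sample \<Rightarrow> vertex \<Rightarrow> real" where "Xv \<omega> v = - ln (Bv \<omega> v)"
definition Yv :: "sample \<Rightarrow> vertex \<Rightarrow> real" where "Yv \<omega> v = - ln (Hv \<omega> v)"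
definition ev :: "sample \<Rightarrow> vertex \<Rightarrow> real" where "ev \<omega> v = snd (snd (\<omega> v))"

end

theory Submission
  imports Defs "HOL-Real_Asymp.Real_Asymp"
begin

text \<open>
  All bounds are first-moment bounds over a generation: if a weight \<phi> of the states (B, H, T)
  satisfies E (\<phi>(child 1) + \<phi>(child 2)) \<le> \<rho> \<phi>(parent), then the expected sum of \<phi> over
  generation n is at most \<rho>^n \<phi>(1, 1, 0), and Markov's inequality bounds the probability that
  some vertex of generation n carries a large weight.
  The weight exp ((X + Y + T) / 2) grows by the factor 8 and rules out X, Y or T above a large
  multiple of n. The weight exp (- V (X, Y)), with V (a, b) = \<theta> a + K (a + 1) log ((a + b + 2) / (a + 1)),
  rules out X below n / M while Y stays below M n: the rule P favours splitting the coordinate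
  that lags behind, and this bias makes the growth factor of the weight as small as desired;
  exp (- V (Y, X)) does the same for Y. Finally, while X and Y stay in [j / M, M j] the rate R
  is at most M^2, so T is at least M^-2 times the sum S of the exponential clocks along the
  second half of the path; exp (- \<theta> S) shrinks by the factor 2 / (1 + \<theta>) per generation,
  which rules out small T.
\<close>

section \<open>The sample space\<close>

type_synonym label = "real \<times> real \<times> real"

lemma sets_borel_pair[measurable_cong]:
  "sets (borel :: ('a::second_countable_topology \<times> 'b::second_countable_topology) measure) =
     sets (borel \<Otimes>\<^sub>M borel)"
  by (simp only: borel_prod)

lemma sets_label_measure[measurable_cong]:
  "sets label_measure = sets (borel \<Otimes>\<^sub>M (borel \<Otimes>\<^sub>M borel))"
  unfolding label_measure_def by (intro sets_pair_measure_cong) auto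

lemma space_label_measure[simp]: "space label_measure = UNIV"
  by (simp add: label_measure_def space_pair_measure)

lemma space_tree_space[simp]: "space tree_space = UNIV"
  by (simp add: tree_space_def space_PiM)

lemma prob_space_label_measure: "prob_space label_measure"
  unfolding label_measure_def
  by (intro prob_space_pair prob_space_uniform_measure prob_space_exponential_density) auto

interpretation label_measure: prob_space label_measure
  by (rule prob_space_label_measure)

interpretation labels: product_prob_space "\<lambda>_::vertex. label_measure" UNIV
  by unfold_locales

interpretation tree_space: prob_space tree_space
  unfolding tree_space_def by (rule labels.P.prob_space_axioms)

lemma measurable_vertex_label: "(\<lambda>\<omega>. \<omega> v) \<in> measurable tree_space label_measure"
  unfolding tree_space_def by measurable

lemma measurable_subtree:
  assumes "F \<in> measurable M tree_space"
  shows "(\<lambda>x u. F x (c # u)) \<in> measurable M tree_space"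
  using assms unfolding tree_space_def by (intro measurable_PiM_single') auto

lemma measurable_root_subtree:
  "(\<lambda>\<omega>. (\<omega> [], \<lambda>u. \<omega> (c # u))) \<in> measurable tree_space (label_measure \<Otimes>\<^sub>M tree_space)"
  by (intro measurable_Pair measurable_vertex_label measurable_subtree measurable_ident_sets refl)

section \<open>First moments over a generation\<close>

(* Unlike walk, tree_walk re-roots the sample at every step and records the depth d: a walk of
   length n + 1 is a step at the root followed by a walk in the subtree, an independent copy of
   the whole tree. *)
fun tree_walk ::
  "(nat \<Rightarrow> label \<Rightarrow> 'st \<Rightarrow> bool \<Rightarrow> 'st) \<Rightarrow> sample \<Rightarrow> nat \<Rightarrow> 'st \<Rightarrow> vertex \<Rightarrow> 'st" where
  "tree_walk f \<omega> d s [] = s"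
| "tree_walk f \<omega> d s (c # cs) = tree_walk f (\<lambda>u. \<omega> (c # u)) (Suc d) (f d (\<omega> []) s c) cs"

lemma tree_walk_snoc:
  "tree_walk f \<omega> d s (w @ [c]) = f (d + length w) (\<omega> w) (tree_walk f \<omega> d s w) c"
  by (induction w arbitrary: \<omega> d s) auto

lemma measurable_tree_walk:
  assumes f: "\<And>d c. (\<lambda>p. f d (fst p) (snd p) c) \<in> measurable (label_measure \<Otimes>\<^sub>M borel) borel"
    and "F \<in> measurable M tree_space" and "g \<in> measurable M borel"
  shows "(\<lambda>x. tree_walk f (F x) d (g x) w) \<in> measurable M borel"
  using assms(2,3)
proof (induction w arbitrary: F g d)
  case (Cons c cs)
  have "(\<lambda>x. F x []) \<in> measurable M label_measure"
    using Cons.prems(1) unfolding tree_space_def by measurable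
  then have "(\<lambda>x. f d (F x []) (g x) c) \<in> measurable M borel"
    using measurable_compose[OF measurable_Pair f] Cons.prems(2) by simp
  then show ?case
    using Cons.IH[OF measurable_subtree[OF Cons.prems(1)]] by simp
qed simp

lemma distr_tree_space_root:
  "distr (label_measure \<Otimes>\<^sub>M (\<Pi>\<^sub>M v\<in>UNIV - {[]}. label_measure)) tree_space (\<lambda>(x, X). X([] := x)) =
    tree_space"
proof -
  have "insert [] (UNIV - {[]}) = (UNIV :: vertex set)" by auto
  then show ?thesis
    using distr_pair_PiM_eq_PiM[of "UNIV - {[]}" "\<lambda>_. label_measure" "[]"] prob_space_label_measure
    unfolding tree_space_def by simp
qed

lemma distr_tree_space_subtree:
  "distr (\<Pi>\<^sub>M v\<in>UNIV - {[]}. label_measure) tree_space (\<lambda>\<omega> u. \<omega> (c # u)) = tree_space"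
  using distr_PiM_reindex[of "UNIV - {[]}" "\<lambda>_. label_measure" "\<lambda>u. c # u" UNIV]
    prob_space_label_measure
  unfolding tree_space_def by (auto simp: inj_on_def restrict_UNIV)

lemma nn_integral_tree_space_split:
  fixes G :: "label \<Rightarrow> sample \<Rightarrow> ennreal"
  assumes G[measurable]: "(\<lambda>p. G (fst p) (snd p)) \<in> borel_measurable (label_measure \<Otimes>\<^sub>M tree_space)"
  shows "(\<integral>\<^sup>+\<omega>. G (\<omega> []) (\<lambda>u. \<omega> (c # u)) \<partial>tree_space) =
    (\<integral>\<^sup>+l. (\<integral>\<^sup>+\<omega>. G l \<omega> \<partial>tree_space) \<partial>label_measure)"
proof -
  let ?P = "\<Pi>\<^sub>M v\<in>UNIV - {[]}. label_measure"
  interpret P: prob_space ?P by (intro prob_space_PiM prob_space_label_measure)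
  have [measurable]: "(\<lambda>\<omega> u. \<omega> (c # u)) \<in> measurable ?P tree_space"
    unfolding tree_space_def by (rule measurable_PiM_single') auto
  have [measurable]: "(\<lambda>(x, X). X([] := x)) \<in> measurable (label_measure \<Otimes>\<^sub>M ?P) tree_space"
    unfolding tree_space_def
  proof (rule measurable_PiM_single')
    fix i :: vertex
    show "(\<lambda>p. (case p of (x, X) \<Rightarrow> X([] := x)) i) \<in> measurable (label_measure \<Otimes>\<^sub>M ?P) label_measure"
      by (cases "i = []") (simp_all add: case_prod_beta')
  qed auto
  from measurable_compose[OF measurable_root_subtree G]
  have [measurable]: "(\<lambda>\<omega>. G (\<omega> []) (\<lambda>u. \<omega> (c # u))) \<in> borel_measurable tree_space"
    by simp
  have "(\<lambda>p. (fst p, \<lambda>u. snd p (c # u))) \<in> measurable (label_measure \<Otimes>\<^sub>M ?P) (label_measure \<Otimes>\<^sub>M tree_space)"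
    unfolding tree_space_def by (intro measurable_Pair measurable_PiM_single') auto
  note [measurable] = measurable_compose[OF this G, simplified]
  have "(\<integral>\<^sup>+\<omega>. G (\<omega> []) (\<lambda>u. \<omega> (c # u)) \<partial>tree_space) =
      (\<integral>\<^sup>+(l, \<omega>). G l (\<lambda>u. \<omega> (c # u)) \<partial>(label_measure \<Otimes>\<^sub>M ?P))"
    by (subst distr_tree_space_root[symmetric], subst nn_integral_distr) (auto simp: case_prod_beta')
  also have "\<dots> = (\<integral>\<^sup>+l. \<integral>\<^sup>+\<omega>. G l (\<lambda>u. \<omega> (c # u)) \<partial>?P \<partial>label_measure)"
    by (subst P.nn_integral_fst[symmetric]) (auto simp: case_prod_beta')
  also have "\<dots> = (\<integral>\<^sup>+l. (\<integral>\<^sup>+\<omega>. G l \<omega> \<partial>tree_space) \<partial>label_measure)"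
  proof (intro nn_integral_cong)
    fix l
    have [measurable]: "G l \<in> borel_measurable tree_space"
      using measurable_Pair2[OF G, of l] by simp
    show "(\<integral>\<^sup>+\<omega>. G l (\<lambda>u. \<omega> (c # u)) \<partial>?P) = (\<integral>\<^sup>+\<omega>. G l \<omega> \<partial>tree_space)"
      by (subst distr_tree_space_subtree[symmetric], subst nn_integral_distr) auto
  qed
  finally show ?thesis .
qed

lemma finite_generation: "finite {w :: vertex. length w = n}"
  using finite_lists_length_eq[of "UNIV :: bool set" n] by simp

lemma sum_generation_Suc:
  fixes h :: "vertex \<Rightarrow> 'a::comm_monoid_add"
  shows "(\<Sum>w | length w = Suc n. h w) = (\<Sum>c\<in>UNIV. \<Sum>w | length w = n. h (c # w))"
proof -
  have gen: "{w :: vertex. length w = Suc n} = (\<lambda>(c, w). c # w) ` (UNIV \<times> {w. length w = n})"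
    by (auto simp: length_Suc_conv image_iff)
  have "inj_on (\<lambda>(c, w). c # w) (UNIV \<times> {w :: vertex. length w = n})"
    by (auto simp: inj_on_def)
  then show ?thesis
    unfolding gen by (subst sum.reindex) (simp_all add: sum.cartesian_product case_prod_beta')
qed

lemma nn_integral_generation_Suc:
  fixes \<phi> :: "'st::topological_space \<Rightarrow> ennreal"
  assumes f: "\<And>d c. (\<lambda>p. f d (fst p) (snd p) c) \<in> measurable (label_measure \<Otimes>\<^sub>M borel) borel"
    and \<phi>[measurable]: "\<phi> \<in> borel_measurable borel"
  shows "(\<integral>\<^sup>+\<omega>. (\<Sum>w | length w = Suc n. \<phi> (tree_walk f \<omega> d s w)) \<partial>tree_space) =
    (\<Sum>c\<in>UNIV. \<integral>\<^sup>+l. (\<integral>\<^sup>+\<omega>. (\<Sum>w | length w = n. \<phi> (tree_walk f \<omega> (Suc d) (f d l s c) w))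
      \<partial>tree_space) \<partial>label_measure)"
proof -
  define G where "G c l \<omega> = (\<Sum>w | length w = n. \<phi> (tree_walk f \<omega> (Suc d) (f d l s c) w))" for c l \<omega>
  have G[measurable]: "(\<lambda>p. G c (fst p) (snd p)) \<in> borel_measurable (label_measure \<Otimes>\<^sub>M tree_space)" for c
  proof -
    have "(\<lambda>p. f d (fst p) s c) \<in> measurable (label_measure \<Otimes>\<^sub>M tree_space) borel"
      using measurable_compose[OF measurable_Pair[OF measurable_fst measurable_const] f] by simp
    from measurable_tree_walk[OF f measurable_snd this]
    show ?thesis unfolding G_def by measurable
  qed
  have [measurable]: "(\<lambda>\<omega>. G c (\<omega> []) (\<lambda>u. \<omega> (c # u))) \<in> borel_measurable tree_space" for c
    using measurable_compose[OF measurable_root_subtree G] by simp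
  have "(\<integral>\<^sup>+\<omega>. (\<Sum>w | length w = Suc n. \<phi> (tree_walk f \<omega> d s w)) \<partial>tree_space) =
      (\<integral>\<^sup>+\<omega>. (\<Sum>c\<in>UNIV. G c (\<omega> []) (\<lambda>u. \<omega> (c # u))) \<partial>tree_space)"
    by (simp add: sum_generation_Suc G_def)
  also have "\<dots> = (\<Sum>c\<in>UNIV. \<integral>\<^sup>+\<omega>. G c (\<omega> []) (\<lambda>u. \<omega> (c # u)) \<partial>tree_space)"
    by (rule nn_integral_sum) simp
  also have "\<dots> = (\<Sum>c\<in>UNIV. \<integral>\<^sup>+l. (\<integral>\<^sup>+\<omega>. G c l \<omega> \<partial>tree_space) \<partial>label_measure)"
    by (intro sum.cong refl nn_integral_tree_space_split G)
  finally show ?thesis unfolding G_def .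
qed

lemma nn_integral_generation_le:
  fixes \<phi> :: "'st::topological_space \<Rightarrow> ennreal" and \<rho> :: "nat \<Rightarrow> ennreal"
  assumes f: "\<And>d c. (\<lambda>p. f d (fst p) (snd p) c) \<in> measurable (label_measure \<Otimes>\<^sub>M borel) borel"
    and \<phi>[measurable]: "\<phi> \<in> borel_measurable borel"
    and drift: "\<And>d s. (\<Sum>c\<in>UNIV. \<integral>\<^sup>+l. \<phi> (f d l s c) \<partial>label_measure) \<le> \<rho> d * \<phi> s"
  shows "(\<integral>\<^sup>+\<omega>. (\<Sum>w | length w = n. \<phi> (tree_walk f \<omega> d s w)) \<partial>tree_space) \<le>
    (\<Prod>i<n. \<rho> (d + i)) * \<phi> s"
proof (induction n arbitrary: d s)
  case 0
  have "{w :: vertex. length w = 0} = {[]}" by auto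
  then show ?case by (simp add: tree_space.emeasure_space_1[simplified])
next
  case (Suc n)
  have [measurable]: "(\<lambda>l. f d l s c) \<in> measurable label_measure borel" for c
    using measurable_compose[OF measurable_Pair[OF measurable_ident_sets[OF refl] measurable_const] f]
    by simp
  have "(\<integral>\<^sup>+\<omega>. (\<Sum>w | length w = Suc n. \<phi> (tree_walk f \<omega> d s w)) \<partial>tree_space) \<le>
      (\<Sum>c\<in>UNIV. \<integral>\<^sup>+l. (\<Prod>i<n. \<rho> (Suc d + i)) * \<phi> (f d l s c) \<partial>label_measure)"
    unfolding nn_integral_generation_Suc[OF f \<phi>]
    by (intro sum_mono nn_integral_mono Suc.IH)
  also have "\<dots> = (\<Prod>i<n. \<rho> (Suc d + i)) * (\<Sum>c\<in>UNIV. \<integral>\<^sup>+l. \<phi> (f d l s c) \<partial>label_measure)"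
    by (simp add: nn_integral_cmult sum_distrib_left)
  also have "\<dots> \<le> (\<Prod>i<n. \<rho> (Suc d + i)) * (\<rho> d * \<phi> s)"
    by (intro mult_left_mono drift) simp
  also have "\<dots> = (\<Prod>i<Suc n. \<rho> (d + i)) * \<phi> s"
    by (simp only: prod.lessThan_Suc_shift) (simp add: mult_ac)
  finally show ?case .
qed

section \<open>The fragmentation step\<close>

definition label_step :: "label \<Rightarrow> real \<times> real \<times> real \<Rightarrow> bool \<Rightarrow> real \<times> real \<times> real" where
  "label_step l s c =
    (case l of (us, ud, e) \<Rightarrow> case s of (B, H, T) \<Rightarrow>
      let fr = (if c then 1 - us else us); X = - ln B; Y = - ln H
      in if ud \<le> Pf X Y then (fr * B, H, T + e / Rf X Y) else (B, fr * H, T + e / Rf X Y))"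

lemma label_step_simps:
  "label_step (us, ud, e) (B, H, T) c =
    (if ud \<le> Pf (- ln B) (- ln H)
     then ((if c then 1 - us else us) * B, H, T + e / Rf (- ln B) (- ln H))
     else (B, (if c then 1 - us else us) * H, T + e / Rf (- ln B) (- ln H)))"
  by (simp add: label_step_def Let_def)

lemma measurable_Pf[measurable]:
  assumes [measurable]: "f \<in> borel_measurable M" "g \<in> borel_measurable M"
  shows "(\<lambda>x. Pf (f x) (g x)) \<in> borel_measurable M"
  unfolding Pf_def by measurable

lemma measurable_Rf[measurable]:
  assumes [measurable]: "f \<in> borel_measurable M" "g \<in> borel_measurable M"
  shows "(\<lambda>x. Rf (f x) (g x)) \<in> borel_measurable M"
  unfolding Rf_def by measurable

lemma Pf_bounds: "0 \<le> x \<Longrightarrow> 0 \<le> y \<Longrightarrow> 0 \<le> Pf x y \<and> Pf x y \<le> 1"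
  by (auto simp: Pf_def field_simps)

lemma Rf_ge_1: "0 \<le> x \<Longrightarrow> 0 \<le> y \<Longrightarrow> 1 \<le> Rf x y"
  by (auto simp: Rf_def field_simps le_max_iff_disj)

lemma measurable_label_step:
  "(\<lambda>p. label_step (fst p) (snd p) c) \<in> measurable (label_measure \<Otimes>\<^sub>M borel) borel"
  unfolding label_step_def Let_def case_prod_beta by measurable

lemma state_eq_tree_walk: "state \<omega> w = tree_walk (\<lambda>_. label_step) \<omega> 0 (1, 1, 0) w"
proof -
  have "walk \<omega> v s w = tree_walk (\<lambda>_. label_step) (\<lambda>u. \<omega> (v @ u)) (length v) s w" for v s
  proof (induction w arbitrary: v s)
    case (Cons c w)
    have "step \<omega> v s c = label_step (\<omega> v) s c"
      by (cases s; cases "\<omega> v") (simp add: step_def label_step_def Let_def)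
    then show ?case using Cons.IH[of "v @ [c]"] by simp
  qed simp
  from this[of "[]"] show ?thesis by (simp add: state_def)
qed

lemma state_snoc: "state \<omega> (w @ [c]) = label_step (\<omega> w) (state \<omega> w) c"
  by (simp add: state_eq_tree_walk tree_walk_snoc)

lemma measurable_state: "(\<lambda>\<omega>. state \<omega> w) \<in> borel_measurable tree_space"
  unfolding state_eq_tree_walk
  by (rule measurable_tree_walk[OF measurable_label_step]) auto

lemma measurable_state_components[measurable]:
  "(\<lambda>\<omega>. state \<omega> w) \<in> measurable tree_space (borel \<Otimes>\<^sub>M (borel \<Otimes>\<^sub>M borel))"
  using measurable_state by (simp only: borel_prod)

lemma measurable_ev[measurable]: "(\<lambda>\<omega>. ev \<omega> v) \<in> borel_measurable tree_space"
proof -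
  have "(\<lambda>\<omega>. \<omega> v) \<in> measurable tree_space (borel \<Otimes>\<^sub>M (borel \<Otimes>\<^sub>M borel))"
    using measurable_vertex_label by (simp only: measurable_cong_sets[OF refl sets_label_measure])
  then show ?thesis unfolding ev_def by measurable
qed

lemma Tv_snoc: "Tv \<omega> (v @ [c]) = Tv \<omega> v + ev \<omega> v / Rf (Xv \<omega> v) (Yv \<omega> v)"
  by (cases "state \<omega> v"; cases "\<omega> v")
     (simp add: Tv_def Xv_def Yv_def Bv_def Hv_def ev_def state_snoc label_step_simps)

lemma Tv_eq_sum:
  "Tv \<omega> v = (\<Sum>j<length v. ev \<omega> (take j v) / Rf (Xv \<omega> (take j v)) (Yv \<omega> (take j v)))"
proof (induction v rule: rev_induct)
  case Nil
  then show ?case by (simp add: Tv_def state_def)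
next
  case (snoc c v)
  then show ?case by (simp add: Tv_snoc)
qed

section \<open>The label distribution\<close>

abbreviation uniform01 :: "real measure" where
  "uniform01 \<equiv> uniform_measure lborel {0<..<1}"

abbreviation exponential1 :: "real measure" where
  "exponential1 \<equiv> density lborel (exponential_density 1)"

interpretation uniform01: prob_space uniform01
  by (intro prob_space_uniform_measure) auto

interpretation exponential1: prob_space exponential1
  by (intro prob_space_exponential_density) auto

lemma AE_uniform01: "AE u in uniform01. 0 < u \<and> u < 1"
  by (rule AE_uniform_measureI) auto

lemma AE_exponential1: "AE e in exponential1. 0 \<le> e"
  by (subst AE_density) (auto simp: exponential_density_def intro!: AE_I2)

lemma nn_integral_uniform01:
  assumes [measurable]: "f \<in> borel_measurable borel"
  shows "(\<integral>\<^sup>+u. f u \<partial>uniform01) = (\<integral>\<^sup>+u. f u * indicator {0<..<1} u \<partial>lborel)"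
  by (subst nn_integral_uniform_measure) (auto simp: divide_ennreal_def)

lemma nn_integral_uniform01_powr:
  assumes "a > -1"
  shows "(\<integral>\<^sup>+u. ennreal (u powr a) \<partial>uniform01) \<le> ennreal (1 / (a + 1))"
proof -
  have "((\<lambda>u. if u \<in> {0..1} then u powr a else 0) has_integral 1 / (a + 1)) UNIV"
    using has_integral_powr_from_0[OF assms, of 1] by (subst has_integral_restrict_UNIV) simp
  then have "(\<integral>\<^sup>+u. ennreal (if u \<in> {0..1} then u powr a else 0) \<partial>lborel) = ennreal (1 / (a + 1))"
    by (intro nn_integral_has_integral_lborel) auto
  moreover have "(\<integral>\<^sup>+u. ennreal (u powr a) \<partial>uniform01) \<le>
      (\<integral>\<^sup>+u. ennreal (if u \<in> {0..1} then u powr a else 0) \<partial>lborel)"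
    by (subst nn_integral_uniform01) (auto intro!: nn_integral_mono split: split_indicator)
  ultimately show ?thesis by simp
qed

lemma nn_integral_uniform01_reflect:
  assumes [measurable]: "g \<in> borel_measurable borel"
  shows "(\<integral>\<^sup>+u. g (1 - u) \<partial>uniform01) = (\<integral>\<^sup>+u. g u \<partial>uniform01)"
proof -
  have "(\<integral>\<^sup>+u. g u \<partial>uniform01) = ennreal \<bar>-1\<bar> *
      (\<integral>\<^sup>+u. g (1 + (-1) * u) * indicator {0<..<1} (1 + (-1) * u) \<partial>lborel)"
    by (subst nn_integral_uniform01, simp)
       (rule nn_integral_real_affine[where f="\<lambda>u. g u * indicator {0<..<1} u"]; simp)
  also have "\<dots> = (\<integral>\<^sup>+u. g (1 - u) \<partial>uniform01)"
    by (subst nn_integral_uniform01, simp) (auto intro!: nn_integral_cong split: split_indicator)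
  finally show ?thesis ..
qed

lemma emeasure_uniform01_greaterThan:
  assumes "0 \<le> t" "t \<le> 1"
  shows "emeasure uniform01 {t<..} = ennreal (1 - t)"
proof -
  have "{0<..<1} \<inter> {t<..} = {t<..<(1::real)}" using assms by auto
  then show ?thesis using assms by (simp add: divide_ennreal_def)
qed

lemma emeasure_uniform01_atMost:
  assumes "0 \<le> t" "t \<le> 1"
  shows "emeasure uniform01 {..t} = ennreal t"
proof -
  have "{0<..<1} \<inter> {..t} = (if t = 1 then {0<..<1} else {0<..t})" using assms by auto
  then show ?thesis using assms by (simp add: divide_ennreal_def)
qed

lemma nn_integral_exponential1_exp:
  assumes "b < 1"
  shows "(\<integral>\<^sup>+x. ennreal (exp (b * x)) \<partial>exponential1) = ennreal (1 / (1 - b))"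
proof -
  have "((\<lambda>x. if x \<in> {0..} then exp (- (1 - b) * x) else 0) has_integral 1 / (1 - b)) UNIV"
    using has_integral_exp_minus_to_infinity[of "1 - b" 0] assms
    by (subst has_integral_restrict_UNIV) simp
  then have "(\<integral>\<^sup>+x. ennreal (if x \<in> {0..} then exp (- (1 - b) * x) else 0) \<partial>lborel) = 1 / (1 - b)"
    by (intro nn_integral_has_integral_lborel) auto
  moreover have "(\<integral>\<^sup>+x. ennreal (exp (b * x)) \<partial>exponential1) =
      (\<integral>\<^sup>+x. ennreal (if x \<in> {0..} then exp (- (1 - b) * x) else 0) \<partial>lborel)"
    by (subst nn_integral_density)
       (auto intro!: nn_integral_cong simp: exponential_density_def ennreal_mult'[symmetric]
          exp_add[symmetric] algebra_simps)
  ultimately show ?thesis by simp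
qed

lemma nn_integral_label_measure:
  assumes [measurable]: "f \<in> borel_measurable label_measure"
  shows "(\<integral>\<^sup>+l. f l \<partial>label_measure) =
    (\<integral>\<^sup>+us. \<integral>\<^sup>+ud. \<integral>\<^sup>+e. f (us, ud, e) \<partial>exponential1 \<partial>uniform01 \<partial>uniform01)"
proof -
  interpret inner: prob_space "uniform01 \<Otimes>\<^sub>M exponential1"
    by (intro prob_space_pair uniform01.prob_space_axioms exponential1.prob_space_axioms)
  have [measurable]: "f \<in> borel_measurable (uniform01 \<Otimes>\<^sub>M (uniform01 \<Otimes>\<^sub>M exponential1))"
    using assms by (simp add: label_measure_def)
  have "(\<integral>\<^sup>+l. f l \<partial>label_measure) = (\<integral>\<^sup>+us. \<integral>\<^sup>+p. f (us, p) \<partial>(uniform01 \<Otimes>\<^sub>M exponential1) \<partial>uniform01)"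
    unfolding label_measure_def by (rule inner.nn_integral_fst[symmetric]) simp
  also have "\<dots> = (\<integral>\<^sup>+us. \<integral>\<^sup>+ud. \<integral>\<^sup>+e. f (us, ud, e) \<partial>exponential1 \<partial>uniform01 \<partial>uniform01)"
  proof (intro nn_integral_cong)
    fix us
    have "(\<lambda>p. f (us, p)) \<in> borel_measurable (uniform01 \<Otimes>\<^sub>M exponential1)"
      by measurable
    then show "(\<integral>\<^sup>+p. f (us, p) \<partial>(uniform01 \<Otimes>\<^sub>M exponential1)) =
        (\<integral>\<^sup>+ud. \<integral>\<^sup>+e. f (us, ud, e) \<partial>exponential1 \<partial>uniform01)"
      by (simp add: exponential1.nn_integral_fst[symmetric])
  qed
  finally show ?thesis .
qed

lemma AE_label_measure: "AE l in label_measure. 0 < fst l \<and> fst l < 1 \<and> 0 \<le> snd (snd l)"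
proof -
  interpret inner: pair_prob_space uniform01 exponential1 by unfold_locales
  interpret outer: pair_prob_space uniform01 "uniform01 \<Otimes>\<^sub>M exponential1" by unfold_locales
  have e: "AE p in uniform01 \<Otimes>\<^sub>M exponential1. 0 \<le> snd p"
  proof (rule inner.AE_pair_measure)
    show "AE u in uniform01. AE e in exponential1. 0 \<le> snd (u, e)"
      using AE_exponential1 by simp
  qed measurable
  show ?thesis
    unfolding label_measure_def
  proof (rule outer.AE_pair_measure)
    show "AE u in uniform01. AE p in uniform01 \<Otimes>\<^sub>M exponential1.
        0 < fst (u, p) \<and> fst (u, p) < 1 \<and> 0 \<le> snd (snd (u, p))"
      using AE_uniform01 by eventually_elim (use e in auto)
  qed measurable
qed

lemma nn_integral_label_step:
  fixes F :: "real \<times> real \<times> real \<Rightarrow> ennreal"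
  assumes B: "0 < B" "B \<le> 1" and H: "0 < H" "H \<le> 1" and [measurable]: "F \<in> borel_measurable borel"
  defines "p \<equiv> Pf (- ln B) (- ln H)" and "R \<equiv> Rf (- ln B) (- ln H)"
  shows "(\<integral>\<^sup>+l. F (label_step l (B, H, T) c) \<partial>label_measure) =
    (\<integral>\<^sup>+u. ennreal p * (\<integral>\<^sup>+e. F (u * B, H, T + e / R) \<partial>exponential1)
        + ennreal (1 - p) * (\<integral>\<^sup>+e. F (B, u * H, T + e / R) \<partial>exponential1) \<partial>uniform01)"
proof -
  have p: "0 \<le> p" "p \<le> 1" using Pf_bounds[of "- ln B" "- ln H"] B H by (auto simp: p_def)
  define g where "g u = ennreal p * (\<integral>\<^sup>+e. F (u * B, H, T + e / R) \<partial>exponential1)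
      + ennreal (1 - p) * (\<integral>\<^sup>+e. F (B, u * H, T + e / R) \<partial>exponential1)" for u
  have [measurable]: "g \<in> borel_measurable borel"
    unfolding g_def by measurable
  have [measurable]: "(\<lambda>l. F (label_step l (B, H, T) c)) \<in> borel_measurable label_measure"
    unfolding label_step_def Let_def case_prod_beta by measurable
  have "(\<integral>\<^sup>+l. F (label_step l (B, H, T) c) \<partial>label_measure) =
      (\<integral>\<^sup>+us. \<integral>\<^sup>+ud. \<integral>\<^sup>+e. F (label_step (us, ud, e) (B, H, T) c) \<partial>exponential1 \<partial>uniform01 \<partial>uniform01)"
    by (rule nn_integral_label_measure) measurable
  also have "\<dots> = (\<integral>\<^sup>+us. g (if c then 1 - us else us) \<partial>uniform01)"
  proof (intro nn_integral_cong)
    fix us :: real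
    define fr where "fr = (if c then 1 - us else us)"
    define A1 where "A1 = (\<integral>\<^sup>+e. F (fr * B, H, T + e / R) \<partial>exponential1)"
    define A2 where "A2 = (\<integral>\<^sup>+e. F (B, fr * H, T + e / R) \<partial>exponential1)"
    have "(\<integral>\<^sup>+ud. \<integral>\<^sup>+e. F (label_step (us, ud, e) (B, H, T) c) \<partial>exponential1 \<partial>uniform01) =
        (\<integral>\<^sup>+ud. A1 * indicator {..p} ud + A2 * indicator {p<..} ud \<partial>uniform01)"
      by (intro nn_integral_cong)
         (auto simp: label_step_simps A1_def A2_def fr_def p_def R_def split: split_indicator)
    also have "\<dots> = A1 * emeasure uniform01 {..p} + A2 * emeasure uniform01 {p<..}"
      by (simp add: nn_integral_add nn_integral_cmult_indicator)
    also have "\<dots> = g fr"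
      by (simp only: emeasure_uniform01_atMost[OF p] emeasure_uniform01_greaterThan[OF p])
         (simp add: g_def A1_def A2_def mult.commute)
    finally show "(\<integral>\<^sup>+ud. \<integral>\<^sup>+e. F (label_step (us, ud, e) (B, H, T) c) \<partial>exponential1 \<partial>uniform01) =
        g (if c then 1 - us else us)"
      by (simp add: fr_def)
  qed
  also have "\<dots> = (\<integral>\<^sup>+u. g u \<partial>uniform01)"
    by (cases c) (simp_all add: nn_integral_uniform01_reflect)
  finally show ?thesis unfolding g_def .
qed

lemma nn_integral_label_step_le:
  fixes F :: "real \<times> real \<times> real \<Rightarrow> ennreal"
  assumes B: "0 < B" "B \<le> 1" and H: "0 < H" "H \<le> 1" and F: "F \<in> borel_measurable borel"
  defines "p \<equiv> Pf (- ln B) (- ln H)" and "R \<equiv> Rf (- ln B) (- ln H)"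
  assumes G1: "\<And>u e. 0 < u \<Longrightarrow> u < 1 \<Longrightarrow> 0 \<le> e \<Longrightarrow> F (u * B, H, T + e / R) \<le> G1 u e"
    and G2: "\<And>u e. 0 < u \<Longrightarrow> u < 1 \<Longrightarrow> 0 \<le> e \<Longrightarrow> F (B, u * H, T + e / R) \<le> G2 u e"
  shows "(\<integral>\<^sup>+l. F (label_step l (B, H, T) c) \<partial>label_measure) \<le>
    (\<integral>\<^sup>+u. ennreal p * (\<integral>\<^sup>+e. G1 u e \<partial>exponential1)
        + ennreal (1 - p) * (\<integral>\<^sup>+e. G2 u e \<partial>exponential1) \<partial>uniform01)"
  unfolding nn_integral_label_step[OF B H F] p_def[symmetric] R_def[symmetric]
  using AE_uniform01
proof (intro nn_integral_mono_AE, eventually_elim)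
  case (elim u)
  then show ?case
    by (intro add_mono mult_left_mono nn_integral_mono_AE) (auto intro: AE_mp[OF AE_exponential1] G1 G2)
qed

section \<open>Weights with controlled growth\<close>

definition admissible :: "real \<times> real \<times> real \<Rightarrow> bool" where
  "admissible s \<longleftrightarrow> 0 < fst s \<and> fst s \<le> 1 \<and> 0 < fst (snd s) \<and> fst (snd s) \<le> 1"

lemma admissible_simps[simp]: "admissible (B, H, T) \<longleftrightarrow> 0 < B \<and> B \<le> 1 \<and> 0 < H \<and> H \<le> 1"
  by (simp add: admissible_def)

(* The weights are \<top> off the admissible states, where the drift bounds then hold trivially. *)
definition upper_weight :: "real \<times> real \<times> real \<Rightarrow> ennreal" where
  "upper_weight s = (if admissible s
     then ennreal (exp ((- ln (fst s) - ln (fst (snd s)) + snd (snd s)) / 2)) else \<top>)"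

lemma measurable_upper_weight[measurable]: "upper_weight \<in> borel_measurable borel"
  unfolding upper_weight_def admissible_def by measurable

lemma upper_weight_child_le:
  assumes B: "0 < B" "B \<le> 1" and H: "0 < H" "H \<le> 1"
  shows "(\<integral>\<^sup>+l. upper_weight (label_step l (B, H, T) c) \<partial>label_measure) \<le> 4 * upper_weight (B, H, T)"
proof -
  define \<Phi> where "\<Phi> = exp ((- ln B - ln H + T) / 2)"
  define p where "p = Pf (- ln B) (- ln H)"
  have p: "0 \<le> p" "p \<le> 1" using Pf_bounds[of "- ln B" "- ln H"] B H by (auto simp: p_def)
  define G where "G u e = ennreal (u powr (-1/2) * \<Phi>) * ennreal (exp ((1/2) * e))" for u e :: real
  have "(\<integral>\<^sup>+l. upper_weight (label_step l (B, H, T) c) \<partial>label_measure) \<le>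
      (\<integral>\<^sup>+u. ennreal p * (\<integral>\<^sup>+e. G u e \<partial>exponential1)
        + ennreal (1 - p) * (\<integral>\<^sup>+e. G u e \<partial>exponential1) \<partial>uniform01)"
    unfolding p_def
  proof (rule nn_integral_label_step_le[OF B H measurable_upper_weight])
    fix u e :: real assume u: "0 < u" "u < 1" and e: "0 \<le> e"
    have "e / Rf (- ln B) (- ln H) \<le> e"
      using Rf_ge_1[of "- ln B" "- ln H"] B H e
      by (simp add: divide_le_eq_1 divide_le_eq mult_le_cancel_left1)
    then have "exp ((- ln u - ln B - ln H + (T + e / Rf (- ln B) (- ln H))) / 2) \<le>
        u powr (-1/2) * \<Phi> * exp ((1/2) * e)"
      using u by (simp add: \<Phi>_def powr_def exp_add[symmetric] add_divide_distrib diff_divide_distrib)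
    moreover have "0 < u * B" "u * B \<le> 1" "0 < u * H" "u * H \<le> 1"
      using u B H by (auto intro: mult_le_one)
    ultimately show "upper_weight (u * B, H, T + e / Rf (- ln B) (- ln H)) \<le> G u e"
      "upper_weight (B, u * H, T + e / Rf (- ln B) (- ln H)) \<le> G u e"
      using u B H
      by (auto simp: upper_weight_def G_def ln_mult ennreal_mult'[symmetric] algebra_simps
          intro!: ennreal_leI)
  qed
  also have "\<dots> = (\<integral>\<^sup>+u. \<integral>\<^sup>+e. G u e \<partial>exponential1 \<partial>uniform01)"
    using p by (simp flip: distrib_right ennreal_plus)
  also have "\<dots> = (\<integral>\<^sup>+u. ennreal (u powr (-1/2) * \<Phi>) * 2 \<partial>uniform01)"
    using nn_integral_exponential1_exp[of "1/2"] by (simp add: G_def nn_integral_cmult)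
  also have "\<dots> = 2 * ennreal \<Phi> * (\<integral>\<^sup>+u. ennreal (u powr (-1/2)) \<partial>uniform01)"
    by (subst nn_integral_cmult[symmetric])
       (auto intro!: nn_integral_cong simp: ennreal_mult \<Phi>_def mult_ac)
  also have "\<dots> \<le> 2 * ennreal \<Phi> * 2"
    using nn_integral_uniform01_powr[of "-1/2"] by (intro mult_left_mono) auto
  finally show ?thesis
    using B H by (simp add: upper_weight_def \<Phi>_def mult_ac)
qed

lemma upper_weight_drift:
  "(\<Sum>c\<in>UNIV. \<integral>\<^sup>+l. upper_weight (label_step l s c) \<partial>label_measure) \<le> 8 * upper_weight s"
proof (cases "admissible s")
  case False
  then show ?thesis by (simp add: upper_weight_def)
next
  case True
  then obtain B H T where "s = (B, H, T)" "0 < B" "B \<le> 1" "0 < H" "H \<le> 1"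
    by (cases s) auto
  then have "(\<Sum>c\<in>UNIV. \<integral>\<^sup>+l. upper_weight (label_step l s c) \<partial>label_measure) \<le>
      (\<Sum>c\<in>(UNIV :: bool set). 4 * upper_weight s)"
    by (intro sum_mono) (simp add: upper_weight_child_le)
  then show ?thesis by simp
qed

definition potential :: "real \<Rightarrow> real \<Rightarrow> real \<Rightarrow> real \<Rightarrow> real" where
  "potential \<theta> K a b = \<theta> * a + K * ((a + 1) * (ln (a + b + 2) - ln (a + 1)))"

lemma ln_add_diff_ge:
  fixes t c :: real
  assumes "0 < t" "0 \<le> c"
  shows "c / (t + c) \<le> ln (t + c) - ln t"
proof -
  have "ln (t / (t + c)) \<le> t / (t + c) - 1"
    using assms by (intro ln_le_minus_one) auto
  moreover have "ln (t / (t + c)) = ln t - ln (t + c)" "t / (t + c) - 1 = - (c / (t + c))"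
    using assms by (simp_all add: ln_div field_simps)
  ultimately show ?thesis by linarith
qed

lemma mult_ln_add_diff_mono:
  fixes t t' c :: real
  assumes "0 < t" "t \<le> t'" "0 \<le> c"
  shows "t * (ln (t + c) - ln t) \<le> t' * (ln (t' + c) - ln t')"
proof (rule DERIV_nonneg_imp_increasing_open[of t t'])
  fix x assume x: "t < x" "x < t'"
  then have "0 < x" "0 < x + c" using assms by auto
  then have "((\<lambda>t. t * (ln (t + c) - ln t)) has_real_derivative (ln (x + c) - ln x) - c / (x + c)) (at x)"
    by (auto intro!: derivative_eq_intros simp: field_simps)
  moreover have "0 \<le> (ln (x + c) - ln x) - c / (x + c)"
    using ln_add_diff_ge[OF \<open>0 < x\<close> assms(3)] by simp
  ultimately show "\<exists>y. ((\<lambda>t. t * (ln (t + c) - ln t)) has_real_derivative y) (at x) \<and> 0 \<le> y"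
    by blast
next
  show "continuous_on {t..t'} (\<lambda>t. t * (ln (t + c) - ln t))"
    using assms by (intro continuous_intros) auto
qed (use assms in auto)

lemma potential_mono_left:
  assumes "0 \<le> a" "0 \<le> b" "0 \<le> E" "0 \<le> K"
  shows "potential \<theta> K a b + \<theta> * E \<le> potential \<theta> K (a + E) b"
proof -
  have "(a + 1) * (ln ((a + 1) + (b + 1)) - ln (a + 1)) \<le>
      (a + E + 1) * (ln ((a + E + 1) + (b + 1)) - ln (a + E + 1))"
    using assms by (intro mult_ln_add_diff_mono) auto
  then have "K * ((a + 1) * (ln (a + b + 2) - ln (a + 1))) \<le>
      K * ((a + E + 1) * (ln (a + E + b + 2) - ln (a + E + 1)))"
    using assms by (intro mult_left_mono) (auto simp: add_ac)
  then show ?thesis unfolding potential_def by (simp add: algebra_simps)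
qed

lemma potential_mono_right:
  assumes "0 \<le> a" "0 \<le> b" "b \<le> b'" "0 \<le> K"
  shows "potential \<theta> K a b \<le> potential \<theta> K a b'"
  using assms unfolding potential_def by (auto intro!: mult_left_mono)

lemma potential_mono:
  assumes "0 \<le> a" "a \<le> a'" "0 \<le> b" "b \<le> b'" "0 \<le> \<theta>" "0 \<le> K"
  shows "potential \<theta> K a b \<le> potential \<theta> K a' b'"
proof -
  have "potential \<theta> K a b + \<theta> * (a' - a) \<le> potential \<theta> K a' b"
    using potential_mono_left[of a b "a' - a" K \<theta>] assms by simp
  moreover have "0 \<le> \<theta> * (a' - a)" using assms by simp
  ultimately have "potential \<theta> K a b \<le> potential \<theta> K a' b" by linarith
  also have "\<dots> \<le> potential \<theta> K a' b'"
    using assms by (intro potential_mono_right) auto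
  finally show ?thesis .
qed

lemma potential_right_increment:
  assumes "0 \<le> a" "0 \<le> b" "0 < \<delta>" "\<delta> \<le> E" "0 \<le> K"
  shows "potential \<theta> K a b + K * \<delta> * (a + 1) / (a + b + 2 + \<delta>) \<le> potential \<theta> K a (b + E)"
proof -
  have "\<delta> / (a + b + 2 + \<delta>) \<le> ln (a + b + 2 + \<delta>) - ln (a + b + 2)"
    using ln_add_diff_ge[of "a + b + 2" \<delta>] assms by simp
  also have "\<dots> \<le> ln (a + (b + E) + 2) - ln (a + b + 2)"
    using assms by simp
  finally have "K * ((a + 1) * (\<delta> / (a + b + 2 + \<delta>))) \<le>
      K * ((a + 1) * (ln (a + (b + E) + 2) - ln (a + b + 2)))"
    using assms by (intro mult_left_mono) auto
  then show ?thesis unfolding potential_def by (simp add: algebra_simps)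
qed

lemma exp_neg_potential_left_shift:
  assumes "0 \<le> a" "0 \<le> b" "0 < u" "u < 1" "0 \<le> \<theta>" "0 \<le> K" "0 < \<delta>"
  shows "exp (- potential \<theta> K (a - ln u) b) \<le>
    exp (- potential \<theta> K a b) * (indicator {exp (- \<delta>)<..} u + exp (- (\<theta> * \<delta>)))"
proof -
  have shift: "potential \<theta> K a b + \<theta> * (- ln u) \<le> potential \<theta> K (a - ln u) b"
    using potential_mono_left[of a b "- ln u" K \<theta>] assms by simp
  show ?thesis
  proof (cases "exp (- \<delta>) < u")
    case True
    have "0 \<le> \<theta> * (- ln u)" using assms by (simp add: mult_nonneg_nonpos)
    then show ?thesis using True shift by (simp add: distrib_left add_increasing2)
  next
    case False
    then have "\<delta> \<le> - ln u" using assms ln_le_cancel_iff[of u "exp (- \<delta>)"] by simp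
    then have "\<theta> * \<delta> \<le> \<theta> * (- ln u)" using assms by (intro mult_left_mono) auto
    then show ?thesis using False shift by (simp add: exp_add[symmetric])
  qed
qed

lemma exp_neg_potential_right_shift:
  assumes "0 \<le> a" "0 \<le> b" "0 < u" "u < 1" "0 \<le> K" "0 < \<delta>"
  shows "exp (- potential \<theta> K a (b - ln u)) \<le>
    exp (- potential \<theta> K a b) * (indicator {exp (- \<delta>)<..} u + exp (- (K * \<delta> * (a + 1) / (a + b + 2 + \<delta>))))"
proof (cases "exp (- \<delta>) < u")
  case True
  have "potential \<theta> K a b \<le> potential \<theta> K a (b - ln u)"
    using assms by (intro potential_mono_right) auto
  then show ?thesis using True by (simp add: distrib_left add_increasing2)
next
  case False
  then have "\<delta> \<le> - ln u" using assms ln_le_cancel_iff[of u "exp (- \<delta>)"] by simp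
  then have "potential \<theta> K a b + K * \<delta> * (a + 1) / (a + b + 2 + \<delta>) \<le> potential \<theta> K a (b + - ln u)"
    using assms by (intro potential_right_increment) auto
  then show ?thesis using False by (simp add: exp_add[symmetric])
qed

lemma mult_exp_neg_le:
  fixes c x :: real
  assumes "0 < c" "0 \<le> x"
  shows "x * exp (- (c * x)) \<le> 1 / c"
proof -
  have "c * x \<le> exp (c * x)" using exp_ge_add_one_self[of "c * x"] by linarith
  then show ?thesis using assms by (simp add: exp_minus field_simps)
qed

lemma split_bias_exp_le:
  fixes a b q K \<delta> :: real
  assumes a: "0 \<le> a" and b: "0 \<le> b" and q: "0 \<le> q" "q \<le> 1"
    and bias: "a < b \<Longrightarrow> q \<le> (a + 1) / (2 * (b + 1))"
    and K: "0 < K" and \<delta>: "0 < \<delta>" "\<delta> \<le> 1"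
  shows "q * exp (- (K * \<delta> * (a + 1) / (a + b + 2 + \<delta>))) \<le> 3 / (K * \<delta>)"
proof -
  define c where "c = K * \<delta>"
  define v where "v = (a + 1) / (a + b + 2 + \<delta>)"
  have c: "0 < c" using K \<delta> by (simp add: c_def)
  have v: "0 < v" using a b \<delta> by (simp add: v_def)
  have "q * exp (- (c * v)) \<le> 3 / c"
  proof (cases "a < b")
    case True
    have "(a + 1) / (2 * (b + 1)) \<le> (a + 1) / ((2 / 3) * (a + b + 2 + \<delta>))"
      using True a b \<delta> by (intro divide_left_mono) auto
    also have "\<dots> = (3 / 2) * v" by (simp add: v_def field_simps)
    finally have "q \<le> (3 / 2) * v" using bias[OF True] by linarith
    then have "q * exp (- (c * v)) \<le> (3 / 2) * v * exp (- (c * v))"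
      by (intro mult_right_mono) auto
    also have "\<dots> \<le> (3 / 2) * (1 / c)"
      using mult_exp_neg_le[OF c, of v] v by (simp add: mult.assoc)
    finally show ?thesis using c by (simp add: field_simps)
  next
    case False
    have "1 / 3 \<le> v" using False a b \<delta> by (simp add: v_def field_simps)
    have "q * exp (- (c * v)) \<le> exp (- (c * v))"
      using q by (simp add: mult_left_le_one_le)
    also have "\<dots> \<le> exp (- (c * (1 / 3)))"
      using \<open>1 / 3 \<le> v\<close> c by simp
    also have "\<dots> \<le> 3 * ((1 / 3) * exp (- (c * (1 / 3))))" by simp
    also have "\<dots> \<le> 3 * (1 / c)"
      using mult_exp_neg_le[OF c, of "1 / 3"] by simp
    finally show ?thesis by simp
  qed
  then show ?thesis by (simp add: c_def v_def)
qed

lemma exp_neg_potential_mixture_le: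
  assumes "0 \<le> a" "0 \<le> b" "0 \<le> q" "q \<le> 1" "0 < u" "u < 1" "0 \<le> \<theta>" "0 \<le> K" "0 < \<delta>"
  shows "(1 - q) * exp (- potential \<theta> K (a - ln u) b) + q * exp (- potential \<theta> K a (b - ln u)) \<le>
    exp (- potential \<theta> K a b) * (indicator {exp (- \<delta>)<..} u +
      ((1 - q) * exp (- (\<theta> * \<delta>)) + q * exp (- (K * \<delta> * (a + 1) / (a + b + 2 + \<delta>)))))"
proof -
  have "(1 - q) * exp (- potential \<theta> K (a - ln u) b) \<le>
      (1 - q) * (exp (- potential \<theta> K a b) * (indicator {exp (- \<delta>)<..} u + exp (- (\<theta> * \<delta>))))"
    using exp_neg_potential_left_shift[of a b u \<theta> K \<delta>] assms by (intro mult_left_mono) auto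
  moreover have "q * exp (- potential \<theta> K a (b - ln u)) \<le>
      q * (exp (- potential \<theta> K a b) *
        (indicator {exp (- \<delta>)<..} u + exp (- (K * \<delta> * (a + 1) / (a + b + 2 + \<delta>)))))"
    using exp_neg_potential_right_shift[of a b u K \<delta> \<theta>] assms by (intro mult_left_mono) auto
  ultimately show ?thesis by (simp add: algebra_simps)
qed

(* The shift - ln u stays below \<delta> with probability 1 - exp (- \<delta>) \<le> \<delta>; otherwise it lowers the weight
   by exp (- \<theta> \<delta>) when it hits the first coordinate, and by a factor that split_bias_exp_le
   controls when it hits the second one. *)
lemma nn_integral_potential_step:
  fixes a b q :: real
  assumes a: "0 \<le> a" and b: "0 \<le> b" and q: "0 \<le> q" "q \<le> 1"
    and bias: "a < b \<Longrightarrow> q \<le> (a + 1) / (2 * (b + 1))"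
    and \<theta>: "0 \<le> \<theta>" and K: "0 < K" and \<delta>: "0 < \<delta>" "\<delta> \<le> 1"
  shows "(\<integral>\<^sup>+u. ennreal ((1 - q) * exp (- potential \<theta> K (a - ln u) b) +
      q * exp (- potential \<theta> K a (b - ln u))) \<partial>uniform01)
    \<le> ennreal ((\<delta> + exp (- (\<theta> * \<delta>)) + 3 / (K * \<delta>)) * exp (- potential \<theta> K a b))"
proof -
  define \<Phi> where "\<Phi> = exp (- potential \<theta> K a b)"
  define \<alpha> where "\<alpha> = exp (- (\<theta> * \<delta>))"
  define \<beta> where "\<beta> = exp (- (K * \<delta> * (a + 1) / (a + b + 2 + \<delta>)))"
  define t where "t = exp (- \<delta>)"
  have t: "0 < t" "t \<le> 1" "1 - t \<le> \<delta>"
    using \<delta> exp_ge_add_one_self[of "- \<delta>"] by (auto simp: t_def)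
  have "(\<integral>\<^sup>+u. ennreal ((1 - q) * exp (- potential \<theta> K (a - ln u) b) +
      q * exp (- potential \<theta> K a (b - ln u))) \<partial>uniform01)
      \<le> (\<integral>\<^sup>+u. ennreal \<Phi> * indicator {t<..} u + ennreal (\<Phi> * ((1 - q) * \<alpha> + q * \<beta>)) \<partial>uniform01)"
    using AE_uniform01
  proof (intro nn_integral_mono_AE, eventually_elim)
    case (elim u)
    then have u: "0 < u" "u < 1" by auto
    have "ennreal (\<Phi> * (indicator {t<..} u + ((1 - q) * \<alpha> + q * \<beta>))) =
        ennreal \<Phi> * indicator {t<..} u + ennreal (\<Phi> * ((1 - q) * \<alpha> + q * \<beta>))"
      using q by (simp add: \<Phi>_def \<alpha>_def \<beta>_def distrib_left ennreal_plus indicator_def)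
    with exp_neg_potential_mixture_le[OF a b q u \<theta> _ \<delta>(1)] K
    show ?case by (metis ennreal_leI \<Phi>_def \<alpha>_def \<beta>_def t_def less_imp_le)
  qed
  also have "\<dots> = ennreal \<Phi> * emeasure uniform01 {t<..} + ennreal (\<Phi> * ((1 - q) * \<alpha> + q * \<beta>))"
    by (simp add: nn_integral_add nn_integral_cmult_indicator)
  also have "emeasure uniform01 {t<..} = ennreal (1 - t)"
    using t by (intro emeasure_uniform01_greaterThan) auto
  also have "ennreal \<Phi> * ennreal (1 - t) + ennreal (\<Phi> * ((1 - q) * \<alpha> + q * \<beta>)) \<le>
      ennreal (\<Phi> * (\<delta> + \<alpha> + 3 / (K * \<delta>)))"
  proof -
    have "(1 - q) * \<alpha> \<le> \<alpha>" using q by (simp add: \<alpha>_def mult_left_le_one_le)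
    moreover have "q * \<beta> \<le> 3 / (K * \<delta>)"
      unfolding \<beta>_def by (rule split_bias_exp_le[OF a b q bias K \<delta>])
    ultimately have "\<Phi> * (1 - t) + \<Phi> * ((1 - q) * \<alpha> + q * \<beta>) \<le> \<Phi> * (\<delta> + \<alpha> + 3 / (K * \<delta>))"
      using t by (simp add: \<Phi>_def flip: distrib_left)
    moreover have "ennreal \<Phi> * ennreal (1 - t) + ennreal (\<Phi> * ((1 - q) * \<alpha> + q * \<beta>)) =
        ennreal (\<Phi> * (1 - t) + \<Phi> * ((1 - q) * \<alpha> + q * \<beta>))"
      using t q by (simp add: \<Phi>_def \<alpha>_def \<beta>_def ennreal_mult ennreal_plus)
    ultimately show ?thesis by (metis ennreal_leI)
  qed
  finally show ?thesis by (simp add: \<Phi>_def \<alpha>_def mult.commute)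
qed

lemma nn_integral_label_step_log_coords:
  fixes F :: "real \<times> real \<times> real \<Rightarrow> ennreal" and f :: "real \<Rightarrow> real \<Rightarrow> real"
  assumes B: "0 < B" "B \<le> 1" and H: "0 < H" "H \<le> 1" and F: "F \<in> borel_measurable borel"
    and F_eq: "\<And>s. admissible s \<Longrightarrow> F s = ennreal (f (- ln (fst s)) (- ln (fst (snd s))))"
    and f_nonneg: "\<And>a b. 0 \<le> f a b"
  defines "x \<equiv> - ln B" and "y \<equiv> - ln H"
  shows "(\<integral>\<^sup>+l. F (label_step l (B, H, T) c) \<partial>label_measure) \<le>
    (\<integral>\<^sup>+u. ennreal (Pf x y * f (x - ln u) y + (1 - Pf x y) * f x (y - ln u)) \<partial>uniform01)"
proof -
  have p: "0 \<le> Pf x y" "Pf x y \<le> 1" using Pf_bounds[of x y] B H by (auto simp: x_def y_def)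
  have "(\<integral>\<^sup>+l. F (label_step l (B, H, T) c) \<partial>label_measure) \<le>
      (\<integral>\<^sup>+u. ennreal (Pf x y) * (\<integral>\<^sup>+e. ennreal (f (x - ln u) y) \<partial>exponential1)
        + ennreal (1 - Pf x y) * (\<integral>\<^sup>+e. ennreal (f x (y - ln u)) \<partial>exponential1) \<partial>uniform01)"
    unfolding x_def y_def
    by (rule nn_integral_label_step_le[OF B H F])
       (use B H in \<open>auto simp: F_eq ln_mult mult_le_one minus_diff_commute\<close>)
  also have "\<dots> = (\<integral>\<^sup>+u. ennreal (Pf x y * f (x - ln u) y + (1 - Pf x y) * f x (y - ln u)) \<partial>uniform01)"
    using p f_nonneg by (simp add: exponential1.emeasure_space_1[simplified] ennreal_mult ennreal_plus)
  finally show ?thesis .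
qed

definition lower_weight_x :: "real \<Rightarrow> real \<Rightarrow> real \<times> real \<times> real \<Rightarrow> ennreal" where
  "lower_weight_x \<theta> K s = (if admissible s
     then ennreal (exp (- potential \<theta> K (- ln (fst s)) (- ln (fst (snd s))))) else \<top>)"

definition lower_weight_y :: "real \<Rightarrow> real \<Rightarrow> real \<times> real \<times> real \<Rightarrow> ennreal" where
  "lower_weight_y \<theta> K s = (if admissible s
     then ennreal (exp (- potential \<theta> K (- ln (fst (snd s))) (- ln (fst s)))) else \<top>)"

lemma measurable_lower_weight_x[measurable]: "lower_weight_x \<theta> K \<in> borel_measurable borel"
  unfolding lower_weight_x_def[abs_def] admissible_def potential_def by measurable

lemma measurable_lower_weight_y[measurable]: "lower_weight_y \<theta> K \<in> borel_measurable borel"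
  unfolding lower_weight_y_def[abs_def] admissible_def potential_def by measurable

lemma sum_bool_le:
  fixes f :: "bool \<Rightarrow> ennreal"
  assumes "\<And>c. f c \<le> ennreal (\<rho> * w)" "0 \<le> \<rho>" "0 \<le> w"
  shows "(\<Sum>c\<in>UNIV. f c) \<le> ennreal (2 * \<rho>) * ennreal w"
  using sum_bounded_above[of UNIV f "ennreal (\<rho> * w)"] assms by (simp add: ennreal_mult mult.assoc)

lemma lower_weight_x_drift:
  assumes \<theta>: "0 \<le> \<theta>" and K: "0 < K" and \<delta>: "0 < \<delta>" "\<delta> \<le> 1"
  shows "(\<Sum>c\<in>UNIV. \<integral>\<^sup>+l. lower_weight_x \<theta> K (label_step l s c) \<partial>label_measure) \<le>
    ennreal (2 * (\<delta> + exp (- (\<theta> * \<delta>)) + 3 / (K * \<delta>))) * lower_weight_x \<theta> K s"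
proof (cases "admissible s")
  case False
  then show ?thesis using K \<delta> by (simp add: lower_weight_x_def ennreal_mult_top)
next
  case True
  obtain B H T where s: "s = (B, H, T)" by (cases s)
  have B: "0 < B" "B \<le> 1" and H: "0 < H" "H \<le> 1" using True by (auto simp: s)
  define x where "x = - ln B"
  define y where "y = - ln H"
  have x: "0 \<le> x" and y: "0 \<le> y" using B H by (auto simp: x_def y_def)
  have child: "(\<integral>\<^sup>+l. lower_weight_x \<theta> K (label_step l s c) \<partial>label_measure) \<le>
      ennreal ((\<delta> + exp (- (\<theta> * \<delta>)) + 3 / (K * \<delta>)) * exp (- potential \<theta> K x y))" for c
  proof -
    have "(\<integral>\<^sup>+l. lower_weight_x \<theta> K (label_step l s c) \<partial>label_measure) \<le>
        (\<integral>\<^sup>+u. ennreal ((1 - (1 - Pf x y)) * exp (- potential \<theta> K (x - ln u) y) +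
          (1 - Pf x y) * exp (- potential \<theta> K x (y - ln u))) \<partial>uniform01)"
      unfolding s x_def y_def
      by (simp, rule nn_integral_label_step_log_coords[OF B H measurable_lower_weight_x])
         (auto simp: lower_weight_x_def)
    also have "\<dots> \<le> ennreal ((\<delta> + exp (- (\<theta> * \<delta>)) + 3 / (K * \<delta>)) * exp (- potential \<theta> K x y))"
      by (rule nn_integral_potential_step[OF x y _ _ _ \<theta> K \<delta>])
         (use Pf_bounds[OF x y] in \<open>auto simp: Pf_def\<close>)
    finally show ?thesis .
  qed
  have "lower_weight_x \<theta> K s = ennreal (exp (- potential \<theta> K x y))"
    using B H by (simp add: s lower_weight_x_def x_def y_def)
  then show ?thesis
    using K \<delta> by (simp only:) (rule sum_bool_le[OF child]; simp)
qed

lemma lower_weight_y_drift: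
  assumes \<theta>: "0 \<le> \<theta>" and K: "0 < K" and \<delta>: "0 < \<delta>" "\<delta> \<le> 1"
  shows "(\<Sum>c\<in>UNIV. \<integral>\<^sup>+l. lower_weight_y \<theta> K (label_step l s c) \<partial>label_measure) \<le>
    ennreal (2 * (\<delta> + exp (- (\<theta> * \<delta>)) + 3 / (K * \<delta>))) * lower_weight_y \<theta> K s"
proof (cases "admissible s")
  case False
  then show ?thesis using K \<delta> by (simp add: lower_weight_y_def ennreal_mult_top)
next
  case True
  obtain B H T where s: "s = (B, H, T)" by (cases s)
  have B: "0 < B" "B \<le> 1" and H: "0 < H" "H \<le> 1" using True by (auto simp: s)
  define x where "x = - ln B"
  define y where "y = - ln H"
  have x: "0 \<le> x" and y: "0 \<le> y" using B H by (auto simp: x_def y_def)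
  have child: "(\<integral>\<^sup>+l. lower_weight_y \<theta> K (label_step l s c) \<partial>label_measure) \<le>
      ennreal ((\<delta> + exp (- (\<theta> * \<delta>)) + 3 / (K * \<delta>)) * exp (- potential \<theta> K y x))" for c
  proof -
    have "(\<integral>\<^sup>+l. lower_weight_y \<theta> K (label_step l s c) \<partial>label_measure) \<le>
        (\<integral>\<^sup>+u. ennreal (Pf x y * exp (- potential \<theta> K y (x - ln u)) +
          (1 - Pf x y) * exp (- potential \<theta> K (y - ln u) x)) \<partial>uniform01)"
      unfolding s x_def y_def
      by (rule nn_integral_label_step_log_coords[OF B H measurable_lower_weight_y])
         (auto simp: lower_weight_y_def)
    also have "\<dots> = (\<integral>\<^sup>+u. ennreal ((1 - Pf x y) * exp (- potential \<theta> K (y - ln u) x) +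
          Pf x y * exp (- potential \<theta> K y (x - ln u))) \<partial>uniform01)"
      by (simp add: add.commute)
    also have "\<dots> \<le> ennreal ((\<delta> + exp (- (\<theta> * \<delta>)) + 3 / (K * \<delta>)) * exp (- potential \<theta> K y x))"
      by (rule nn_integral_potential_step[OF y x _ _ _ \<theta> K \<delta>])
         (use Pf_bounds[OF x y] in \<open>auto simp: Pf_def\<close>)
    finally show ?thesis .
  qed
  have "lower_weight_y \<theta> K s = ennreal (exp (- potential \<theta> K y x))"
    using B H by (simp add: s lower_weight_y_def x_def y_def)
  then show ?thesis
    using K \<delta> by (simp only:) (rule sum_bool_le[OF child]; simp)
qed

lemma nn_integral_upper_weight:
  "(\<integral>\<^sup>+\<omega>. (\<Sum>w | length w = n. upper_weight (state \<omega> w)) \<partial>tree_space) \<le> 8 ^ n"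
  using nn_integral_generation_le[where f="\<lambda>_. label_step",
      OF measurable_label_step measurable_upper_weight upper_weight_drift, where d=0 and s="(1, 1, 0)"]
  by (simp add: state_eq_tree_walk upper_weight_def)

lemma nn_integral_lower_weight_x:
  assumes "0 \<le> \<theta>" "0 < K" "0 < \<delta>" "\<delta> \<le> 1"
  shows "(\<integral>\<^sup>+\<omega>. (\<Sum>w | length w = n. lower_weight_x \<theta> K (state \<omega> w)) \<partial>tree_space) \<le>
    ennreal (2 * (\<delta> + exp (- (\<theta> * \<delta>)) + 3 / (K * \<delta>))) ^ n"
proof -
  have "(\<integral>\<^sup>+\<omega>. (\<Sum>w | length w = n. lower_weight_x \<theta> K (state \<omega> w)) \<partial>tree_space) \<le>
      ennreal (2 * (\<delta> + exp (- (\<theta> * \<delta>)) + 3 / (K * \<delta>))) ^ n * lower_weight_x \<theta> K (1, 1, 0)"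
    using nn_integral_generation_le[where f="\<lambda>_. label_step",
        OF measurable_label_step measurable_lower_weight_x
        lower_weight_x_drift[OF assms], where d=0 and s="(1, 1, 0)"]
    by (simp add: state_eq_tree_walk)
  also have "\<dots> \<le> ennreal (2 * (\<delta> + exp (- (\<theta> * \<delta>)) + 3 / (K * \<delta>))) ^ n * 1"
    using assms by (intro mult_left_mono) (simp_all add: lower_weight_x_def potential_def)
  finally show ?thesis by simp
qed

lemma nn_integral_lower_weight_y:
  assumes "0 \<le> \<theta>" "0 < K" "0 < \<delta>" "\<delta> \<le> 1"
  shows "(\<integral>\<^sup>+\<omega>. (\<Sum>w | length w = n. lower_weight_y \<theta> K (state \<omega> w)) \<partial>tree_space) \<le>
    ennreal (2 * (\<delta> + exp (- (\<theta> * \<delta>)) + 3 / (K * \<delta>))) ^ n"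
proof -
  have "(\<integral>\<^sup>+\<omega>. (\<Sum>w | length w = n. lower_weight_y \<theta> K (state \<omega> w)) \<partial>tree_space) \<le>
      ennreal (2 * (\<delta> + exp (- (\<theta> * \<delta>)) + 3 / (K * \<delta>))) ^ n * lower_weight_y \<theta> K (1, 1, 0)"
    using nn_integral_generation_le[where f="\<lambda>_. label_step",
        OF measurable_label_step measurable_lower_weight_y
        lower_weight_y_drift[OF assms], where d=0 and s="(1, 1, 0)"]
    by (simp add: state_eq_tree_walk)
  also have "\<dots> \<le> ennreal (2 * (\<delta> + exp (- (\<theta> * \<delta>)) + 3 / (K * \<delta>))) ^ n * 1"
    using assms by (intro mult_left_mono) (simp_all add: lower_weight_y_def potential_def)
  finally show ?thesis by simp
qed

definition clock_sum :: "nat \<Rightarrow> sample \<Rightarrow> vertex \<Rightarrow> real" where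
  "clock_sum m \<omega> v = (\<Sum>j\<in>{m..<length v}. ev \<omega> (take j v))"

definition clock_step :: "nat \<Rightarrow> nat \<Rightarrow> label \<Rightarrow> real \<Rightarrow> bool \<Rightarrow> real" where
  "clock_step m d l S c = S + (if m \<le> d then snd (snd l) else 0)"

lemma clock_sum_eq_tree_walk: "clock_sum m \<omega> v = tree_walk (clock_step m) \<omega> 0 0 v"
proof (induction v rule: rev_induct)
  case (snoc c v)
  have "clock_sum m \<omega> (v @ [c]) = clock_sum m \<omega> v + (if m \<le> length v then ev \<omega> v else 0)"
    by (simp add: clock_sum_def ev_def)
  then show ?case using snoc by (simp add: tree_walk_snoc clock_step_def ev_def)
qed (simp add: clock_sum_def)

lemma measurable_clock_sum[measurable]: "(\<lambda>\<omega>. clock_sum m \<omega> v) \<in> borel_measurable tree_space"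
  unfolding clock_sum_def by measurable

lemma clock_step_drift:
  assumes "0 \<le> \<theta>"
  shows "(\<Sum>c\<in>UNIV. \<integral>\<^sup>+l. ennreal (exp (- \<theta> * clock_step m d l S c)) \<partial>label_measure) \<le>
    ennreal (2 * (if d < m then 1 else 1 / (1 + \<theta>))) * ennreal (exp (- \<theta> * S))"
proof -
  have "(\<integral>\<^sup>+l. ennreal (exp (- \<theta> * clock_step m d l S c)) \<partial>label_measure) =
      ennreal ((if d < m then 1 else 1 / (1 + \<theta>)) * exp (- \<theta> * S))" for c
  proof (cases "d < m")
    case False
    have "(\<integral>\<^sup>+l. ennreal (exp (- \<theta> * clock_step m d l S c)) \<partial>label_measure) =
        (\<integral>\<^sup>+l. ennreal (exp (- \<theta> * S)) * ennreal (exp ((- \<theta>) * snd (snd l))) \<partial>label_measure)"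
      using False
      by (intro nn_integral_cong) (simp add: clock_step_def distrib_left flip: exp_add ennreal_mult')
    also have "\<dots> = ennreal (exp (- \<theta> * S)) * (\<integral>\<^sup>+e. ennreal (exp ((- \<theta>) * e)) \<partial>exponential1)"
      by (simp add: nn_integral_cmult nn_integral_label_measure uniform01.emeasure_space_1[simplified])
    finally show ?thesis
      using False assms nn_integral_exponential1_exp[of "- \<theta>"] by (simp add: mult.commute flip: ennreal_mult')
  qed (simp add: clock_step_def label_measure.emeasure_space_1[simplified])
  then show ?thesis
    using assms by (intro sum_bool_le) auto
qed

lemma nn_integral_exp_clock_sum:
  assumes "0 \<le> \<theta>"
  shows "(\<integral>\<^sup>+\<omega>. (\<Sum>w | length w = n. ennreal (exp (- \<theta> * clock_sum m \<omega> w))) \<partial>tree_space) \<le>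
    ennreal (2 ^ n / (1 + \<theta>) ^ (n - m))"
proof -
  have "(\<Prod>i<n. 2 * (if i < m then 1 else 1 / (1 + \<theta>))) = (2 ^ n / (1 + \<theta>) ^ (n - m) :: real)"
  proof (induction n)
    case (Suc n)
    then show ?case
      using assms by (cases "n < m") (simp_all add: Suc_diff_le not_less mult_ac)
  qed simp
  then have "(\<Prod>i<n. ennreal (2 * (if i < m then 1 else 1 / (1 + \<theta>)))) = ennreal (2 ^ n / (1 + \<theta>) ^ (n - m))"
    using assms by (simp add: prod_ennreal)
  then show ?thesis
    using nn_integral_generation_le[where f="clock_step m" and \<phi>="\<lambda>S. ennreal (exp (- \<theta> * S))"
        and \<rho>="\<lambda>d. ennreal (2 * (if d < m then 1 else 1 / (1 + \<theta>)))" and n=n and d=0 and s=0]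
      clock_step_drift[OF assms]
    by (simp add: clock_sum_eq_tree_walk clock_step_def)
qed

section \<open>Deviation bounds\<close>

definition regular_sample :: "sample \<Rightarrow> bool" where
  "regular_sample \<omega> \<longleftrightarrow> (\<forall>v. 0 < fst (\<omega> v) \<and> fst (\<omega> v) < 1 \<and> 0 \<le> ev \<omega> v)"

lemma AE_regular_sample: "AE \<omega> in tree_space. regular_sample \<omega>"
  unfolding regular_sample_def ev_def tree_space_def
  by (subst AE_all_countable) (intro allI labels.AE_component[OF UNIV_I AE_label_measure])

lemma admissible_state: "regular_sample \<omega> \<Longrightarrow> admissible (state \<omega> w)"
proof (induction w rule: rev_induct)
  case (snoc c w)
  obtain us ud e where l: "\<omega> w = (us, ud, e)" by (cases "\<omega> w")
  have "0 < us" "us < 1"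
    using snoc.prems l unfolding regular_sample_def by (metis fst_conv)+
  then have "0 < (if c then 1 - us else us)" "(if c then 1 - us else us) < 1" by auto
  then show ?case
    using snoc by (cases "state \<omega> w") (auto simp: state_snoc l label_step_simps intro: mult_le_one)
qed (simp add: state_def)

lemma regular_sample_nonneg:
  assumes "regular_sample \<omega>"
  shows "0 \<le> Xv \<omega> w" "0 \<le> Yv \<omega> w" "0 \<le> ev \<omega> w / Rf (Xv \<omega> w) (Yv \<omega> w)" "0 \<le> Tv \<omega> w"
proof -
  show X: "0 \<le> Xv \<omega> v" and Y: "0 \<le> Yv \<omega> v" for v
    using admissible_state[OF assms, of v] by (auto simp: Xv_def Yv_def Bv_def Hv_def admissible_def)
  show incr: "0 \<le> ev \<omega> v / Rf (Xv \<omega> v) (Yv \<omega> v)" for v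
    using assms Rf_ge_1[OF X Y, of v v] by (simp add: regular_sample_def)
  show "0 \<le> Tv \<omega> w"
    by (simp add: Tv_eq_sum sum_nonneg incr)
qed

lemma sets_Collect_tree_space: "Measurable.pred tree_space P \<Longrightarrow> {\<omega>. P \<omega>} \<in> sets tree_space"
  by (simp add: pred_def)

lemma generation_Markov_inequality:
  fixes g :: "sample \<Rightarrow> vertex \<Rightarrow> ennreal"
  assumes [measurable]: "\<And>w. Measurable.pred tree_space (\<lambda>\<omega>. P \<omega> w)"
    and [measurable]: "\<And>w. (\<lambda>\<omega>. g \<omega> w) \<in> borel_measurable tree_space"
    and c: "0 < c" and b: "0 \<le> b"
    and g_ge: "\<And>\<omega> w. regular_sample \<omega> \<Longrightarrow> P \<omega> w \<Longrightarrow> ennreal c \<le> g \<omega> w"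
    and moment: "(\<integral>\<^sup>+\<omega>. (\<Sum>w | length w = n. g \<omega> w) \<partial>tree_space) \<le> ennreal b"
  shows "measure tree_space {\<omega>. \<exists>w. length w = n \<and> P \<omega> w} \<le> b / c"
proof -
  let ?E = "{\<omega>. \<exists>w. length w = n \<and> P \<omega> w}"
  have E: "?E \<in> sets tree_space"
    by (intro sets_Collect_tree_space) measurable
  have "ennreal c * emeasure tree_space ?E = (\<integral>\<^sup>+\<omega>. ennreal c * indicator ?E \<omega> \<partial>tree_space)"
    using E by (simp add: nn_integral_cmult_indicator)
  also have "\<dots> \<le> (\<integral>\<^sup>+\<omega>. (\<Sum>w | length w = n. g \<omega> w) \<partial>tree_space)"
    using AE_regular_sample
  proof (intro nn_integral_mono_AE, eventually_elim)
    case (elim \<omega>)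
    show ?case
    proof (cases "\<omega> \<in> ?E")
      case True
      then obtain w where w: "length w = n" "P \<omega> w" by blast
      have "ennreal c \<le> g \<omega> w" using g_ge elim w(2) by blast
      also have "\<dots> \<le> (\<Sum>w | length w = n. g \<omega> w)"
        by (rule member_le_sum) (auto simp: w finite_generation)
      finally show ?thesis using True by simp
    qed simp
  qed
  also have "\<dots> \<le> ennreal b" by (fact moment)
  finally have "ennreal (c * measure tree_space ?E) \<le> ennreal b"
    using c by (simp add: tree_space.emeasure_eq_measure ennreal_mult)
  then show ?thesis
    using b c by (simp add: field_simps ennreal_le_iff)
qed

lemma weights_of_state:
  assumes "regular_sample \<omega>"
  shows "upper_weight (state \<omega> w) = ennreal (exp ((Xv \<omega> w + Yv \<omega> w + Tv \<omega> w) / 2))"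
    and "lower_weight_x \<theta> K (state \<omega> w) = ennreal (exp (- potential \<theta> K (Xv \<omega> w) (Yv \<omega> w)))"
    and "lower_weight_y \<theta> K (state \<omega> w) = ennreal (exp (- potential \<theta> K (Yv \<omega> w) (Xv \<omega> w)))"
  using admissible_state[OF assms, of w]
  by (simp_all add: upper_weight_def lower_weight_x_def lower_weight_y_def Xv_def Yv_def Tv_def Bv_def Hv_def)

lemma measure_XYT_large_le:
  "measure tree_space {\<omega>. \<exists>w. length w = n \<and> t \<le> Xv \<omega> w + Yv \<omega> w + Tv \<omega> w} \<le> 8 ^ n * exp (- t / 2)"
proof -
  have "measure tree_space {\<omega>. \<exists>w. length w = n \<and> t \<le> Xv \<omega> w + Yv \<omega> w + Tv \<omega> w} \<le> 8 ^ n / exp (t / 2)"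
  proof (rule generation_Markov_inequality[where g="\<lambda>\<omega> w. upper_weight (state \<omega> w)"])
    show "Measurable.pred tree_space (\<lambda>\<omega>. t \<le> Xv \<omega> w + Yv \<omega> w + Tv \<omega> w)" for w
      unfolding Xv_def Yv_def Bv_def Hv_def Tv_def by measurable
    show "ennreal (exp (t / 2)) \<le> upper_weight (state \<omega> w)"
      if "regular_sample \<omega>" "t \<le> Xv \<omega> w + Yv \<omega> w + Tv \<omega> w" for \<omega> w
      using that by (simp add: weights_of_state)
    show "(\<integral>\<^sup>+\<omega>. (\<Sum>w | length w = n. upper_weight (state \<omega> w)) \<partial>tree_space) \<le> ennreal (8 ^ n)"
      using nn_integral_upper_weight[of n] by (simp flip: ennreal_power)
  qed auto
  then show ?thesis by (simp add: exp_minus field_simps)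
qed

lemma measure_XY_small_le:
  assumes "0 \<le> \<theta>" "0 < K" "0 < \<delta>" "\<delta> \<le> 1" "0 \<le> a" "0 \<le> b"
  shows "measure tree_space {\<omega>. \<exists>w. length w = n \<and> Xv \<omega> w \<le> a \<and> Yv \<omega> w \<le> b} \<le>
    (2 * (\<delta> + exp (- (\<theta> * \<delta>)) + 3 / (K * \<delta>))) ^ n * exp (potential \<theta> K a b)"
proof -
  have "measure tree_space {\<omega>. \<exists>w. length w = n \<and> Xv \<omega> w \<le> a \<and> Yv \<omega> w \<le> b} \<le>
    (2 * (\<delta> + exp (- (\<theta> * \<delta>)) + 3 / (K * \<delta>))) ^ n / exp (- potential \<theta> K a b)"
  proof (rule generation_Markov_inequality[where g="\<lambda>\<omega> w. lower_weight_x \<theta> K (state \<omega> w)"])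
    show "Measurable.pred tree_space (\<lambda>\<omega>. Xv \<omega> w \<le> a \<and> Yv \<omega> w \<le> b)" for w
      unfolding Xv_def Yv_def Bv_def Hv_def by measurable
    show "ennreal (exp (- potential \<theta> K a b)) \<le> lower_weight_x \<theta> K (state \<omega> w)"
      if "regular_sample \<omega>" "Xv \<omega> w \<le> a \<and> Yv \<omega> w \<le> b" for \<omega> w
      using that assms regular_sample_nonneg[OF that(1), of w]
      by (simp add: weights_of_state potential_mono)
    show "(\<integral>\<^sup>+\<omega>. (\<Sum>w | length w = n. lower_weight_x \<theta> K (state \<omega> w)) \<partial>tree_space) \<le>
        ennreal ((2 * (\<delta> + exp (- (\<theta> * \<delta>)) + 3 / (K * \<delta>))) ^ n)"
      using nn_integral_lower_weight_x[OF assms(1-4), of n] assms by (simp flip: ennreal_power)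
  qed (use assms in auto)
  then show ?thesis by (simp add: exp_minus divide_inverse mult_ac)
qed

lemma measure_YX_small_le:
  assumes "0 \<le> \<theta>" "0 < K" "0 < \<delta>" "\<delta> \<le> 1" "0 \<le> a" "0 \<le> b"
  shows "measure tree_space {\<omega>. \<exists>w. length w = n \<and> Yv \<omega> w \<le> a \<and> Xv \<omega> w \<le> b} \<le>
    (2 * (\<delta> + exp (- (\<theta> * \<delta>)) + 3 / (K * \<delta>))) ^ n * exp (potential \<theta> K a b)"
proof -
  have "measure tree_space {\<omega>. \<exists>w. length w = n \<and> Yv \<omega> w \<le> a \<and> Xv \<omega> w \<le> b} \<le>
    (2 * (\<delta> + exp (- (\<theta> * \<delta>)) + 3 / (K * \<delta>))) ^ n / exp (- potential \<theta> K a b)"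
  proof (rule generation_Markov_inequality[where g="\<lambda>\<omega> w. lower_weight_y \<theta> K (state \<omega> w)"])
    show "Measurable.pred tree_space (\<lambda>\<omega>. Yv \<omega> w \<le> a \<and> Xv \<omega> w \<le> b)" for w
      unfolding Xv_def Yv_def Bv_def Hv_def by measurable
    show "ennreal (exp (- potential \<theta> K a b)) \<le> lower_weight_y \<theta> K (state \<omega> w)"
      if "regular_sample \<omega>" "Yv \<omega> w \<le> a \<and> Xv \<omega> w \<le> b" for \<omega> w
      using that assms regular_sample_nonneg[OF that(1), of w]
      by (simp add: weights_of_state potential_mono)
    show "(\<integral>\<^sup>+\<omega>. (\<Sum>w | length w = n. lower_weight_y \<theta> K (state \<omega> w)) \<partial>tree_space) \<le>
        ennreal ((2 * (\<delta> + exp (- (\<theta> * \<delta>)) + 3 / (K * \<delta>))) ^ n)"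
      using nn_integral_lower_weight_y[OF assms(1-4), of n] assms by (simp flip: ennreal_power)
  qed (use assms in auto)
  then show ?thesis by (simp add: exp_minus divide_inverse mult_ac)
qed

lemma measure_clock_sum_small_le:
  assumes "0 \<le> \<theta>"
  shows "measure tree_space {\<omega>. \<exists>w. length w = n \<and> clock_sum m \<omega> w \<le> t} \<le>
    2 ^ n / (1 + \<theta>) ^ (n - m) * exp (\<theta> * t)"
proof -
  have "measure tree_space {\<omega>. \<exists>w. length w = n \<and> clock_sum m \<omega> w \<le> t} \<le>
    2 ^ n / (1 + \<theta>) ^ (n - m) / exp (- \<theta> * t)"
  proof (rule generation_Markov_inequality[where g="\<lambda>\<omega> w. ennreal (exp (- \<theta> * clock_sum m \<omega> w))"])
    show "ennreal (exp (- \<theta> * t)) \<le> ennreal (exp (- \<theta> * clock_sum m \<omega> w))"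
      if "clock_sum m \<omega> w \<le> t" for \<omega> w
      using that assms by (simp add: mult_left_mono)
  qed (use assms nn_integral_exp_clock_sum[OF assms] in auto)
  then show ?thesis by (simp add: exp_minus divide_inverse mult_ac)
qed

section \<open>Exits from the linear regime\<close>

definition box_exit :: "real \<Rightarrow> nat \<Rightarrow> sample set" where
  "box_exit a k = {\<omega>. \<exists>w. length w = k \<and>
     (Xv \<omega> w \<notin> {real k / a .. a * real k} \<or> Yv \<omega> w \<notin> {real k / a .. a * real k})}"

lemma sets_box_exit[measurable]: "box_exit a k \<in> sets tree_space"
  unfolding box_exit_def Xv_def Yv_def Bv_def Hv_def by (intro sets_Collect_tree_space) measurable

lemma measure_box_exit_le:
  assumes "0 \<le> \<theta>" "0 < K" "0 < \<delta>" "\<delta> \<le> 1" "1 \<le> a"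
  shows "measure tree_space (box_exit a k) \<le> 8 ^ k * exp (- (a * k) / 2) +
    2 * ((2 * (\<delta> + exp (- (\<theta> * \<delta>)) + 3 / (K * \<delta>))) ^ k * exp (potential \<theta> K (k / a) (a * k)))"
proof -
  let ?U = "{\<omega>. \<exists>w. length w = k \<and> a * k \<le> Xv \<omega> w + Yv \<omega> w + Tv \<omega> w}"
  let ?X = "{\<omega>. \<exists>w. length w = k \<and> Xv \<omega> w \<le> k / a \<and> Yv \<omega> w \<le> a * k}"
  let ?Y = "{\<omega>. \<exists>w. length w = k \<and> Yv \<omega> w \<le> k / a \<and> Xv \<omega> w \<le> a * k}"
  have sets: "?U \<in> sets tree_space" "?X \<in> sets tree_space" "?Y \<in> sets tree_space"
    unfolding Xv_def Yv_def Bv_def Hv_def Tv_def by (intro sets_Collect_tree_space; measurable)+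
  have "measure tree_space (box_exit a k) \<le> measure tree_space (?U \<union> ?X \<union> ?Y)"
    using AE_regular_sample
  proof (intro tree_space.finite_measure_mono_AE, eventually_elim, intro impI)
    fix \<omega> assume \<omega>: "regular_sample \<omega>" "\<omega> \<in> box_exit a k"
    then obtain w where "length w = k"
      and "Xv \<omega> w \<notin> {real k / a .. a * real k} \<or> Yv \<omega> w \<notin> {real k / a .. a * real k}"
      by (auto simp: box_exit_def)
    with regular_sample_nonneg[OF \<omega>(1), of w] show "\<omega> \<in> ?U \<union> ?X \<union> ?Y"
      by (auto 4 4 simp: not_le)
  qed (use sets in auto)
  also have "\<dots> \<le> measure tree_space ?U + measure tree_space ?X + measure tree_space ?Y"
    using sets by (intro order.trans[OF measure_Un_le] add_right_mono measure_Un_le) auto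
  also have "\<dots> \<le> 8 ^ k * exp (- (a * k) / 2) +
      (2 * (\<delta> + exp (- (\<theta> * \<delta>)) + 3 / (K * \<delta>))) ^ k * exp (potential \<theta> K (k / a) (a * k)) +
      (2 * (\<delta> + exp (- (\<theta> * \<delta>)) + 3 / (K * \<delta>))) ^ k * exp (potential \<theta> K (k / a) (a * k))"
    using assms
    by (intro add_mono measure_XYT_large_le measure_XY_small_le measure_YX_small_le) auto
  finally show ?thesis by (simp add: mult_ac add_ac)
qed

lemma potential_box_corner_le:
  assumes "1 \<le> a" "0 \<le> k" "0 \<le> K"
  shows "potential \<theta> K (k / a) (a * k) \<le> \<theta> * (k / a) + K * ln (a\<^sup>2 + 2) * (k / a + 1)"
proof -
  have "k / a + a * k + 2 \<le> (a\<^sup>2 + 2) * (k / a + 1)"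
    using assms by (simp add: power2_eq_square field_simps)
  moreover have "0 < k / a + a * k + 2" "0 < k / a + 1"
    using assms by (simp_all add: add_nonneg_pos)
  ultimately have "ln (k / a + a * k + 2) \<le> ln ((a\<^sup>2 + 2) * (k / a + 1))"
    by simp
  also have "\<dots> = ln (a\<^sup>2 + 2) + ln (k / a + 1)"
    using assms by (intro ln_mult_pos) (auto intro: add_nonneg_pos)
  finally have "ln (k / a + a * k + 2) - ln (k / a + 1) \<le> ln (a\<^sup>2 + 2)"
    by simp
  then have "K * ((k / a + 1) * (ln (k / a + a * k + 2) - ln (k / a + 1))) \<le> K * ((k / a + 1) * ln (a\<^sup>2 + 2))"
    using assms by (intro mult_left_mono) auto
  then show ?thesis by (simp add: potential_def algebra_simps)
qed

lemma two_power_le_exp: "(2 :: real) ^ k \<le> exp k"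
proof -
  have "(2 :: real) ^ k \<le> exp 1 ^ k"
    using exp_ge_add_one_self[of 1] by (intro power_mono) auto
  then show ?thesis by (simp flip: exp_of_nat_mult)
qed

lemma eight_power_exp_le:
  fixes r M :: real and n :: nat
  assumes "2 * r + 6 \<le> M"
  shows "8 ^ n * exp (- (M * n) / 2) \<le> exp (- r * n)"
proof -
  have "(2 * r + 6) * n \<le> M * n" using assms by (intro mult_right_mono) auto
  then have "exp (3 * n) * exp (- (M * n) / 2) \<le> exp (- r * n)"
    unfolding exp_add[symmetric] by (simp add: algebra_simps)
  moreover have "8 ^ n \<le> exp (3 * n)"
    using two_power_le_exp[of "3 * n"] by (simp add: power_mult)
  ultimately show ?thesis
    by (meson exp_ge_zero mult_right_mono order_trans)
qed

lemma lower_weight_growth_choice: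
  fixes \<rho> :: real
  assumes "0 < \<rho>" "\<rho> \<le> 6"
  shows "\<exists>\<theta> K \<delta>. 0 \<le> \<theta> \<and> 0 < K \<and> 0 < \<delta> \<and> \<delta> \<le> 1 \<and> 2 * (\<delta> + exp (- (\<theta> * \<delta>)) + 3 / (K * \<delta>)) = \<rho>"
proof -
  define \<delta> where "\<delta> = \<rho> / 6"
  have \<delta>: "0 < \<delta>" "\<delta> \<le> 1" using assms by (simp_all add: \<delta>_def)
  then have "ln \<delta> \<le> 0" by simp
  then have "0 \<le> - ln \<delta> / \<delta>" "0 < 3 / \<delta>\<^sup>2" using \<delta> by (simp_all add: divide_nonpos_pos)
  moreover have "2 * (\<delta> + exp (- (- ln \<delta> / \<delta> * \<delta>)) + 3 / (3 / \<delta>\<^sup>2 * \<delta>)) = \<rho>"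
    using \<delta> by (simp add: \<delta>_def power2_eq_square)
  ultimately show ?thesis using \<delta> by blast
qed

lemma box_exit_exponential_decay:
  assumes "0 < c"
  shows "\<exists>a\<ge>1. \<exists>C>0. \<forall>k. measure tree_space (box_exit a k) \<le> C * exp (- c * k)"
proof -
  have "exp (- 2 * c) \<le> 1" using assms by simp
  then obtain \<theta> K \<delta> where \<theta>: "0 \<le> \<theta>" and K: "0 < K" and \<delta>: "0 < \<delta>" "\<delta> \<le> 1"
    and \<rho>: "2 * (\<delta> + exp (- (\<theta> * \<delta>)) + 3 / (K * \<delta>)) = exp (- 2 * c)"
    using lower_weight_growth_choice[of "exp (- 2 * c)"] by fastforce
  define \<Lambda> where "\<Lambda> a = ln (a\<^sup>2 + 2)" for a :: real
  have "eventually (\<lambda>a. 2 * c + 6 \<le> a \<and> \<theta> + K * \<Lambda> a \<le> c * a) at_top"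
    unfolding \<Lambda>_def using assms by (intro eventually_conj; real_asymp)
  then obtain a where a: "2 * c + 6 \<le> a" "\<theta> + K * \<Lambda> a \<le> c * a"
    by (auto simp: eventually_at_top_linorder)
  have a1: "1 \<le> a" using a assms by simp
  have "measure tree_space (box_exit a k) \<le> (1 + 2 * exp (K * \<Lambda> a)) * exp (- c * k)" for k :: nat
  proof -
    have "potential \<theta> K (k / a) (a * k) \<le> (\<theta> + K * \<Lambda> a) * (k / a) + K * \<Lambda> a"
      using potential_box_corner_le[of a k K \<theta>] a1 K by (simp add: \<Lambda>_def algebra_simps)
    also have "\<dots> \<le> c * a * (k / a) + K * \<Lambda> a"
      using a a1 by (intro add_right_mono mult_right_mono) auto
    also have "\<dots> = c * k + K * \<Lambda> a"
      using a1 by simp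
    finally have "exp (- 2 * c) ^ k * exp (potential \<theta> K (k / a) (a * k)) \<le> exp (K * \<Lambda> a) * exp (- c * k)"
      by (simp add: exp_of_nat_mult[symmetric] mult.commute exp_add[symmetric])
    then show ?thesis
      using measure_box_exit_le[OF \<theta> K \<delta> a1, of k, unfolded \<rho>] eight_power_exp_le[OF a(1), of k]
      by (simp add: algebra_simps)
  qed
  moreover have "0 < 1 + 2 * exp (K * \<Lambda> a)" by (simp add: add_pos_nonneg)
  ultimately show ?thesis using a1 by blast
qed

definition exit_event :: "real \<Rightarrow> nat \<Rightarrow> sample set" where
  "exit_event M n = {\<omega> \<in> space tree_space. \<exists>v::vertex. length v = n \<and>
     (Xv \<omega> v \<notin> {real n / M .. M * real n} \<or> Yv \<omega> v \<notin> {real n / M .. M * real n} \<or>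
      Tv \<omega> v < real n / M \<or> Tv \<omega> v + ev \<omega> v / Rf (Xv \<omega> v) (Yv \<omega> v) > M * real n)}"

lemma sets_exit_event[measurable]: "exit_event M n \<in> sets tree_space"
  unfolding exit_event_def Xv_def Yv_def Bv_def Hv_def Tv_def by measurable

lemma Rf_le_of_box:
  assumes "1 \<le> a" "0 \<le> k" "x \<in> {k / a .. a * k}" "y \<in> {k / a .. a * k}"
  shows "Rf x y \<le> a\<^sup>2"
proof -
  have key: "u + 1 \<le> a\<^sup>2 * (v + 1)" if "u \<le> a * k" "k / a \<le> v" for u v
  proof -
    have "a\<^sup>2 * (k / a + 1) = a * k + a\<^sup>2" using assms by (simp add: power2_eq_square field_simps)
    moreover have "1 \<le> a\<^sup>2" using assms by (simp add: one_le_power)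
    moreover have "a\<^sup>2 * (k / a + 1) \<le> a\<^sup>2 * (v + 1)" using that by (intro mult_left_mono) auto
    ultimately show ?thesis using that by linarith
  qed
  have "0 \<le> k / a" "k / a \<le> x" "k / a \<le> y" using assms by auto
  then have "0 < x + 1" "0 < y + 1" by linarith+
  then show ?thesis
    using key[of x y] key[of y x] assms by (simp add: Rf_def pos_divide_le_eq mult.commute)
qed

lemma clock_sum_le_Tv:
  assumes "regular_sample \<omega>" "0 < R"
    and "\<And>j. m \<le> j \<Longrightarrow> j < length v \<Longrightarrow> Rf (Xv \<omega> (take j v)) (Yv \<omega> (take j v)) \<le> R"
  shows "clock_sum m \<omega> v \<le> R * Tv \<omega> v"
proof -
  have "clock_sum m \<omega> v = R * (\<Sum>j\<in>{m..<length v}. ev \<omega> (take j v) / R)"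
    using assms by (simp add: clock_sum_def sum_distrib_left)
  also have "\<dots> \<le> R * (\<Sum>j\<in>{m..<length v}. ev \<omega> (take j v) / Rf (Xv \<omega> (take j v)) (Yv \<omega> (take j v)))"
  proof (intro mult_left_mono sum_mono divide_left_mono)
    fix j assume "j \<in> {m..<length v}"
    then show "Rf (Xv \<omega> (take j v)) (Yv \<omega> (take j v)) \<le> R" using assms by auto
    have "1 \<le> Rf (Xv \<omega> (take j v)) (Yv \<omega> (take j v))"
      using regular_sample_nonneg[OF assms(1), of "take j v"] by (intro Rf_ge_1) auto
    then show "0 < R * Rf (Xv \<omega> (take j v)) (Yv \<omega> (take j v))"
      using assms(2) by simp
  qed (use assms in \<open>auto simp: regular_sample_def\<close>)
  also have "\<dots> \<le> R * Tv \<omega> v"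
  proof (intro mult_left_mono)
    show "(\<Sum>j\<in>{m..<length v}. ev \<omega> (take j v) / Rf (Xv \<omega> (take j v)) (Yv \<omega> (take j v))) \<le> Tv \<omega> v"
      unfolding Tv_eq_sum
      using regular_sample_nonneg(3)[OF assms(1)] by (intro sum_mono2) auto
  qed (use assms in auto)
  finally show ?thesis .
qed

lemma clock_sum_le_of_no_box_exit:
  assumes "regular_sample \<omega>" "1 \<le> a" "\<And>j. m \<le> j \<Longrightarrow> j < length v \<Longrightarrow> \<omega> \<notin> box_exit a j"
  shows "clock_sum m \<omega> v \<le> a\<^sup>2 * Tv \<omega> v"
proof (rule clock_sum_le_Tv[OF assms(1)])
  fix j assume "m \<le> j" "j < length v"
  then show "Rf (Xv \<omega> (take j v)) (Yv \<omega> (take j v)) \<le> a\<^sup>2"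
    using assms(2,3) by (intro Rf_le_of_box[where k="real j"]) (auto simp: box_exit_def)
qed (use assms in auto)

lemma exit_event_cover:
  assumes \<omega>: "regular_sample \<omega>" "\<omega> \<in> exit_event M n" and a: "1 \<le> a" "a \<le> M" and "m \<le> n"
  shows "\<omega> \<in> box_exit a n \<union> (\<Union>j\<in>{m..<n}. box_exit a j) \<union>
    {\<omega>. \<exists>u. length u = Suc n \<and> M * n \<le> Xv \<omega> u + Yv \<omega> u + Tv \<omega> u} \<union>
    {\<omega>. \<exists>v. length v = n \<and> clock_sum m \<omega> v \<le> a\<^sup>2 * n / M}"
proof -
  have box_sub: "{real n / a .. a * real n} \<subseteq> {real n / M .. M * real n}"
    using a by (auto intro: order_trans[OF divide_left_mono] order_trans[OF _ mult_right_mono])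
  obtain v where v: "length v = n" and
    "Xv \<omega> v \<notin> {real n / M .. M * real n} \<or> Yv \<omega> v \<notin> {real n / M .. M * real n} \<or>
     Tv \<omega> v < real n / M \<or> Tv \<omega> v + ev \<omega> v / Rf (Xv \<omega> v) (Yv \<omega> v) > M * real n"
    using \<omega>(2) by (auto simp: exit_event_def)
  then consider
      "Xv \<omega> v \<notin> {real n / M .. M * real n} \<or> Yv \<omega> v \<notin> {real n / M .. M * real n}"
    | "Tv \<omega> v < real n / M"
    | "Tv \<omega> v + ev \<omega> v / Rf (Xv \<omega> v) (Yv \<omega> v) > M * real n"
    by blast
  then show ?thesis
  proof cases
    case 1
    then have "\<omega> \<in> box_exit a n" using v box_sub by (auto simp: box_exit_def)
    then show ?thesis by blast
  next
    case 2
    show ?thesis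
    proof (cases "\<exists>j\<in>{m..<n}. \<omega> \<in> box_exit a j")
      case False
      then have "clock_sum m \<omega> v \<le> a\<^sup>2 * Tv \<omega> v"
        using v by (intro clock_sum_le_of_no_box_exit[OF \<omega>(1) a(1)]) auto
      also have "\<dots> \<le> a\<^sup>2 * n / M"
        using 2 a by (simp add: field_simps)
      finally show ?thesis using v by blast
    qed blast
  next
    case 3
    have "M * n < Xv \<omega> (v @ [False]) + Yv \<omega> (v @ [False]) + Tv \<omega> (v @ [False])"
      using 3 regular_sample_nonneg[OF \<omega>(1), of "v @ [False]"] by (simp add: Tv_snoc)
    then show ?thesis using v by (auto intro!: exI[of _ "v @ [False]"])
  qed
qed

lemma measure_exit_event_le:
  assumes a: "1 \<le> a" "a \<le> M" and "0 \<le> \<theta>" "m \<le> n"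
  shows "measure tree_space (exit_event M n) \<le>
    measure tree_space (box_exit a n) + (\<Sum>j\<in>{m..<n}. measure tree_space (box_exit a j)) +
    8 ^ Suc n * exp (- (M * n) / 2) + 2 ^ n / (1 + \<theta>) ^ (n - m) * exp (\<theta> * (a\<^sup>2 * n / M))"
proof -
  let ?B = "\<Union>j\<in>{m..<n}. box_exit a j"
  let ?U = "{\<omega>. \<exists>u. length u = Suc n \<and> M * n \<le> Xv \<omega> u + Yv \<omega> u + Tv \<omega> u}"
  let ?S = "{\<omega>. \<exists>v. length v = n \<and> clock_sum m \<omega> v \<le> a\<^sup>2 * n / M}"
  have sets: "?B \<in> sets tree_space" "?U \<in> sets tree_space" "?S \<in> sets tree_space"
    unfolding Xv_def Yv_def Bv_def Hv_def Tv_def by (measurable; intro sets_Collect_tree_space; measurable)+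
  have "measure tree_space (exit_event M n) \<le> measure tree_space (box_exit a n \<union> ?B \<union> ?U \<union> ?S)"
    using AE_regular_sample exit_event_cover[OF _ _ assms(1,2,4)] sets
    by (intro tree_space.finite_measure_mono_AE) auto
  also have "\<dots> \<le> measure tree_space (box_exit a n) + measure tree_space ?B + measure tree_space ?U +
      measure tree_space ?S"
    using sets by (intro order.trans[OF measure_Un_le] add_right_mono) auto
  also have "\<dots> \<le> measure tree_space (box_exit a n) + (\<Sum>j\<in>{m..<n}. measure tree_space (box_exit a j)) +
      8 ^ Suc n * exp (- (M * n) / 2) + 2 ^ n / (1 + \<theta>) ^ (n - m) * exp (\<theta> * (a\<^sup>2 * n / M))"
    by (intro add_mono order_refl measure_UNION_le measure_XYT_large_le measure_clock_sum_small_le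
        assms(3)) auto
  finally show ?thesis .
qed

lemma sum_second_half_exp_le:
  fixes C r :: real and n :: nat
  assumes "0 \<le> C" "0 < r"
  shows "(\<Sum>j\<in>{n div 2..<n}. C * exp (- (2 * r) * j)) \<le> C * exp r * n * exp (- r * n)"
proof -
  have "C * exp (- (2 * r) * j) \<le> C * (exp r * exp (- r * n))" if "n div 2 \<le> j" for j
  proof -
    have "r * (real n - 1) \<le> r * (2 * j)" using that assms by (intro mult_left_mono) auto
    then have "exp (- (2 * r) * j) \<le> exp r * exp (- r * n)"
      unfolding exp_add[symmetric] by (simp add: algebra_simps)
    then show ?thesis using assms by (intro mult_left_mono)
  qed
  then have "(\<Sum>j\<in>{n div 2..<n}. C * exp (- (2 * r) * j)) \<le> real (n - n div 2) * (C * (exp r * exp (- r * n)))"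
    using sum_bounded_above[of "{n div 2..<n}"] by (metis atLeastLessThan_iff card_atLeastLessThan)
  also have "\<dots> \<le> real n * (C * (exp r * exp (- r * n)))"
    using assms by (intro mult_right_mono) auto
  finally show ?thesis by (simp add: mult_ac)
qed

lemma clock_term_le:
  fixes r :: real and n :: nat
  assumes "0 < r"
  shows "2 ^ n / (1 + exp (2 * r + 6)) ^ (n - n div 2) * exp n \<le> exp (- r * n)"
proof -
  have "exp ((2 * r + 6) * (n - n div 2)) = exp (2 * r + 6) ^ (n - n div 2)"
    by (simp flip: exp_of_nat_mult)
  also have "\<dots> \<le> (1 + exp (2 * r + 6)) ^ (n - n div 2)"
    by (intro power_mono) auto
  finally have "2 ^ n / (1 + exp (2 * r + 6)) ^ (n - n div 2) * exp n \<le>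
      exp n / exp ((2 * r + 6) * (n - n div 2)) * exp n"
    by (intro mult_right_mono frac_le two_power_le_exp) auto
  also have "\<dots> \<le> exp (- r * n)"
  proof -
    have "(r + 3) * n \<le> (r + 3) * (2 * (n - n div 2))" using assms by (intro mult_left_mono) auto
    then show ?thesis
      unfolding exp_diff[symmetric] exp_add[symmetric] by (simp add: algebra_simps of_nat_diff)
  qed
  finally show ?thesis .
qed

(* The factor exp (2 r + 6) lets the large-time and the clock-sum bounds decay at rate r. *)
lemma measure_exit_event_exponential:
  assumes r: "0 < r" and a: "1 \<le> a"
    and box: "\<And>k. measure tree_space (box_exit a k) \<le> C * exp (- (2 * r) * k)"
  defines "M \<equiv> a\<^sup>2 * exp (2 * r + 6)"
  shows "measure tree_space (exit_event M n) \<le> (C + 9 + C * exp r * n) * exp (- r * n)"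
proof -
  have "a \<le> a\<^sup>2" "1 \<le> a\<^sup>2" "1 + (2 * r + 6) \<le> exp (2 * r + 6)"
    using a mult_mono[OF a a] exp_ge_add_one_self[of "2 * r + 6"] by (simp_all add: power2_eq_square)
  then have M: "a \<le> M" "2 * r + 6 \<le> M" "exp (2 * r + 6) * (a\<^sup>2 * n / M) = n"
    using a r mult_mono[of a "a\<^sup>2" 1 "exp (2 * r + 6)"] mult_mono[of 1 "a\<^sup>2" "2 * r + 6" "exp (2 * r + 6)"]
    by (simp_all add: M_def)
  have "measure tree_space (box_exit a 0) \<le> C" using box[of 0] by simp
  then have C: "0 \<le> C" using measure_nonneg[of tree_space "box_exit a 0"] by linarith
  have "C * exp (- (2 * r) * n) \<le> C * exp (- r * n)"
    using C r by (intro mult_left_mono) (auto simp: mult_right_mono)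
  then have box_n: "measure tree_space (box_exit a n) \<le> C * exp (- r * n)"
    using box[of n] by linarith
  have "(\<Sum>j\<in>{n div 2..<n}. measure tree_space (box_exit a j)) \<le>
      (\<Sum>j\<in>{n div 2..<n}. C * exp (- (2 * r) * j))"
    by (intro sum_mono box)
  also have "\<dots> \<le> C * exp r * n * exp (- r * n)"
    by (rule sum_second_half_exp_le[OF C r])
  finally have "measure tree_space (exit_event M n) \<le>
      C * exp (- r * n) + C * exp r * n * exp (- r * n) + 8 * exp (- r * n) + exp (- r * n)"
    using box_n measure_exit_event_le[OF a M(1), of "exp (2 * r + 6)" "n div 2" n]
      eight_power_exp_le[OF M(2), of n] clock_term_le[OF r, of n] M(3)
    by simp
  then show ?thesis by (simp add: algebra_simps)
qed

theorem lemma4p1: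
  fixes \<kappa> :: real
  assumes "\<kappa> > 0"
  shows "\<exists>M::real > 1. \<exists>N::nat. \<forall>n\<ge>N.
    (let E = {\<omega> \<in> space tree_space. \<exists>v::vertex. length v = n \<and>
               (Xv \<omega> v \<notin> {real n / M .. M * real n} \<or>
                Yv \<omega> v \<notin> {real n / M .. M * real n} \<or>
                Tv \<omega> v < real n / M \<or>
                Tv \<omega> v + ev \<omega> v / Rf (Xv \<omega> v) (Yv \<omega> v) > M * real n)}
     in E \<in> sets tree_space \<and> measure tree_space E \<le> exp (- \<kappa> * real n))"
proof -
  define r where "r = \<kappa> + 2"
  have r: "0 < r" using assms by (simp add: r_def)
  obtain a C where a: "1 \<le> a" and C: "0 < C"
    and box: "\<And>k. measure tree_space (box_exit a k) \<le> C * exp (- (2 * r) * k)"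
    using box_exit_exponential_decay[of "2 * r"] r by auto
  define M where "M = a\<^sup>2 * exp (2 * r + 6)"
  have "exp (2 * r + 6) \<le> M"
    using a by (simp add: M_def one_le_power)
  moreover have "1 < exp (2 * r + 6)" using r by simp
  ultimately have "1 < M" by linarith
  have "eventually (\<lambda>n. (C + 9 + C * exp r * n) * exp (- 2 * real n) \<le> 1) sequentially"
    using C by real_asymp
  then obtain N where N: "\<And>n. N \<le> n \<Longrightarrow> (C + 9 + C * exp r * n) * exp (- 2 * real n) \<le> 1"
    by (auto simp: eventually_sequentially)
  have "measure tree_space (exit_event M n) \<le> exp (- \<kappa> * n)" if "N \<le> n" for n
  proof -
    have "(C + 9 + C * exp r * n) * exp (- r * n) =
        (C + 9 + C * exp r * n) * exp (- 2 * real n) * exp (- \<kappa> * n)"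
      by (simp add: r_def algebra_simps flip: exp_add)
    also have "\<dots> \<le> exp (- \<kappa> * n)"
      using N[OF that] C by (intro mult_left_le_one_le) auto
    finally show ?thesis
      using measure_exit_event_exponential[OF r a box, of n] unfolding M_def by linarith
  qed
  then show ?thesis
    unfolding Let_def exit_event_def[symmetric] using \<open>1 < M\<close> sets_exit_event by blast
qed

end
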